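(* Let $f: \mathbb{R}^{R \times C} \to \mathbb{R}$, $\alpha > 0$, $B \ge 1$, and consider the problems (P1) minimize $f(X)$ subject to $X \ge 0$ and $X$ is block diagonal with at least $B$ blocks up to permutations; (P3) minimize $f(X) + \alpha \sum_{j=1}^B \lambda_{(j)}( L_{\text{sym}}(A_{\text{bp}}(X)))$ subject to $X \ge 0$; (P4) minimize over $(X, U) \in \mathbb{R}^{R\times C}\times \mathbb{R}^{(R + C) \times B}$ the objective $f(X) + \alpha \text{Tr} ( U^T L_{\text{un}}(A_{\text{bp}}(X)) U)$ subject to $X \ge 0$ and $U^T \text{diag}(\text{deg}(A_{\text{bp}}(X))) U = I_B$. 1. Suppose $X$ is a global (local) solution of (P3) such that $\sum_{j=1}^B \lambda_{(j)} ( L_{\text{sym}}(A_{\text{bp}}(X))) = 0$. Then $X$ is a global (local) solution of (P1). 2. Suppose $X$ is a global (local) solution of (P3) such that the largest $B$ row sums and the largest $B$ column sums of $X$ are strictly positive. Then there exists a coordinate-wise minimizer $U$ such that $(X, U)$ is a global (local) minimizer of (P4).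
   Context: $A_{\text{bp}}(X) = \begin{bmatrix} 0 & X \\ X^T & 0\end{bmatrix}$; for an adjacency matrix $A$, $\text{deg}(A) = A\mathbf{1}$, $L_{\text{un}}(A) = \text{diag}(\text{deg}(A)) - A$, $L_{\text{sym}}(A) = I - \text{diag}(\text{deg}(A))^{-1/2} A\, \text{diag}(\text{deg}(A))^{-1/2}$ (Moore–Penrose pseudo-inverse); $\lambda_{(j)}$ is the $j$-th smallest eigenvalue. Block diagonal up to permutations means rows/columns can be permuted to a block diagonal matrix with that many blocks, each containing a non-zero entry. *)

theory Defs
  imports "Jordan_Normal_Form.Matrix" "Jordan_Normal_Form.Char_Poly"
          "HOL-Computational_Algebra.Polynomial"
begin

(* bipartite adjacency A_bp(X) = [[0, X], [X^T, 0]], of size (R+C) x (R+C) *)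
definition A_bp :: "real mat \<Rightarrow> real mat" where
  "A_bp X = mat (dim_row X + dim_col X) (dim_row X + dim_col X)
     (\<lambda>(i,j). if i < dim_row X \<and> dim_row X \<le> j then X $$ (i, j - dim_row X)
             else if dim_row X \<le> i \<and> j < dim_row X then X $$ (j, i - dim_row X)
             else 0)"

definition deg :: "real mat \<Rightarrow> real vec" where
  "deg A = A *\<^sub>v (vec (dim_col A) (\<lambda>_. 1))"

definition diag_of_vec :: "real vec \<Rightarrow> real mat" where
  "diag_of_vec v = mat (dim_vec v) (dim_vec v) (\<lambda>(i,j). if i = j then v $ i else 0)"

definition L_un :: "real mat \<Rightarrow> real mat" where
  "L_un A = diag_of_vec (deg A) - A"

(* diag(deg A)^{-1/2}, Moore-Penrose pseudo-inverse: zero degrees give zero entries *)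
definition deg_inv_sqrt :: "real mat \<Rightarrow> real mat" where
  "deg_inv_sqrt A = mat (dim_row A) (dim_row A)
     (\<lambda>(i,j). if i = j \<and> deg A $ i \<noteq> 0 then 1 / sqrt (deg A $ i) else 0)"

definition L_sym :: "real mat \<Rightarrow> real mat" where
  "L_sym A = 1\<^sub>m (dim_row A) - deg_inv_sqrt A * A * deg_inv_sqrt A"

(* eigenvalues with multiplicity in increasing order (roots of the characteristic
   polynomial; for the real symmetric matrices used here it splits over the reals) *)
definition sorted_eigenvalues :: "real mat \<Rightarrow> real list" where
  "sorted_eigenvalues M = sorted_list_of_multiset (proots (char_poly M))"

definition eig_small :: "nat \<Rightarrow> real mat \<Rightarrow> real" where
  "eig_small j M = sorted_eigenvalues M ! (j - 1)"

definition mtrace :: "real mat \<Rightarrow> real" where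
  "mtrace M = (\<Sum>i<dim_row M. M $$ (i, i))"

definition nonneg_mat :: "real mat \<Rightarrow> bool" where
  "nonneg_mat X \<longleftrightarrow> (\<forall>i<dim_row X. \<forall>j<dim_col X. X $$ (i, j) \<ge> 0)"

(* entrywise max distance (all norms on R^{m x n} are equivalent) *)
definition mdist :: "real mat \<Rightarrow> real mat \<Rightarrow> real" where
  "mdist X Y = Max (insert 0 {\<bar>X $$ (i, j) - Y $$ (i, j)\<bar> | i j. i < dim_row X \<and> j < dim_col X})"

definition block_diag_perm :: "nat \<Rightarrow> real mat \<Rightarrow> bool" where
  "block_diag_perm B X \<longleftrightarrow>
    (\<exists>\<sigma> \<tau> (k::nat) (a::nat\<Rightarrow>nat) (b::nat\<Rightarrow>nat).
       \<sigma> permutes {..<dim_row X} \<and> \<tau> permutes {..<dim_col X} \<and> B \<le> k \<and>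
       a 0 = 0 \<and> a k = dim_row X \<and> b 0 = 0 \<and> b k = dim_col X \<and>
       (\<forall>l<k. a l < a (Suc l) \<and> b l < b (Suc l)) \<and>
       (\<forall>i<dim_row X. \<forall>j<dim_col X. X $$ (\<sigma> i, \<tau> j) \<noteq> 0 \<longrightarrow>
          (\<exists>l<k. a l \<le> i \<and> i < a (Suc l) \<and> b l \<le> j \<and> j < b (Suc l))) \<and>
       (\<forall>l<k. \<exists>i j. a l \<le> i \<and> i < a (Suc l) \<and> b l \<le> j \<and> j < b (Suc l) \<and>
          X $$ (\<sigma> i, \<tau> j) \<noteq> 0))"

definition feas1 :: "nat \<Rightarrow> nat \<Rightarrow> nat \<Rightarrow> real mat \<Rightarrow> bool" where
  "feas1 R C B X \<longleftrightarrow> X \<in> carrier_mat R C \<and> nonneg_mat X \<and> block_diag_perm B X"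

definition feas3 :: "nat \<Rightarrow> nat \<Rightarrow> real mat \<Rightarrow> bool" where
  "feas3 R C X \<longleftrightarrow> X \<in> carrier_mat R C \<and> nonneg_mat X"

definition obj3 :: "(real mat \<Rightarrow> real) \<Rightarrow> real \<Rightarrow> nat \<Rightarrow> real mat \<Rightarrow> real" where
  "obj3 f \<alpha> B X = f X + \<alpha> * (\<Sum>j=1..B. eig_small j (L_sym (A_bp X)))"

definition feas4 :: "nat \<Rightarrow> nat \<Rightarrow> nat \<Rightarrow> real mat \<Rightarrow> real mat \<Rightarrow> bool" where
  "feas4 R C B X U \<longleftrightarrow> X \<in> carrier_mat R C \<and> nonneg_mat X \<and> U \<in> carrier_mat (R + C) B \<and>
     transpose_mat U * diag_of_vec (deg (A_bp X)) * U = 1\<^sub>m B"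

definition obj4 :: "(real mat \<Rightarrow> real) \<Rightarrow> real \<Rightarrow> real mat \<Rightarrow> real mat \<Rightarrow> real" where
  "obj4 f \<alpha> X U = f X + \<alpha> * mtrace (transpose_mat U * L_un (A_bp X) * U)"

definition global_min :: "(real mat \<Rightarrow> bool) \<Rightarrow> (real mat \<Rightarrow> real) \<Rightarrow> real mat \<Rightarrow> bool" where
  "global_min F g X \<longleftrightarrow> F X \<and> (\<forall>Y. F Y \<longrightarrow> g X \<le> g Y)"

definition local_min :: "(real mat \<Rightarrow> bool) \<Rightarrow> (real mat \<Rightarrow> real) \<Rightarrow> real mat \<Rightarrow> bool" where
  "local_min F g X \<longleftrightarrow> F X \<and> (\<exists>\<epsilon>>0. \<forall>Y. F Y \<and> mdist X Y < \<epsilon> \<longrightarrow> g X \<le> g Y)"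

definition global_min2 :: "(real mat \<Rightarrow> real mat \<Rightarrow> bool) \<Rightarrow> (real mat \<Rightarrow> real mat \<Rightarrow> real)
    \<Rightarrow> real mat \<Rightarrow> real mat \<Rightarrow> bool" where
  "global_min2 F g X U \<longleftrightarrow> F X U \<and> (\<forall>Y V. F Y V \<longrightarrow> g X U \<le> g Y V)"

definition local_min2 :: "(real mat \<Rightarrow> real mat \<Rightarrow> bool) \<Rightarrow> (real mat \<Rightarrow> real mat \<Rightarrow> real)
    \<Rightarrow> real mat \<Rightarrow> real mat \<Rightarrow> bool" where
  "local_min2 F g X U \<longleftrightarrow> F X U \<and> (\<exists>\<epsilon>>0. \<forall>Y V. F Y V \<and> mdist X Y < \<epsilon> \<and> mdist U V < \<epsilon>
      \<longrightarrow> g X U \<le> g Y V)"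

definition coord_min :: "(real mat \<Rightarrow> real mat \<Rightarrow> bool) \<Rightarrow> (real mat \<Rightarrow> real mat \<Rightarrow> real)
    \<Rightarrow> real mat \<Rightarrow> real mat \<Rightarrow> bool" where
  "coord_min F g X U \<longleftrightarrow> F X U \<and> (\<forall>V. F X V \<longrightarrow> g X U \<le> g X V)"

definition row_sums :: "real mat \<Rightarrow> real list" where
  "row_sums X = map (\<lambda>i. \<Sum>j<dim_col X. X $$ (i, j)) [0..<dim_row X]"

definition col_sums :: "real mat \<Rightarrow> real list" where
  "col_sums X = map (\<lambda>j. \<Sum>i<dim_row X. X $$ (i, j)) [0..<dim_col X]"

definition largest_B_pos :: "nat \<Rightarrow> real list \<Rightarrow> bool" where
  "largest_B_pos B xs \<longleftrightarrow> (\<forall>j<B. j < length xs \<and> rev (sort xs) ! j > 0)"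

end

theory Submission
  imports Defs "HOL-Combinatorics.List_Permutation"
begin

text \<open>Write \<open>L\<close> for \<open>L_sym (A_bp X)\<close> and \<open>D\<close> for the degree matrix of \<open>A_bp X\<close>. The
  substitution \<open>W = D\<^sup>1\<^sup>/\<^sup>2 U\<close> turns the constraint of (P4) into orthonormality of the columns
  of \<open>W\<close> and \<open>Tr (U\<^sup>T L_un U)\<close> into \<open>Tr (W\<^sup>T L W)\<close>, so by Ky Fan's minimum principle the
  objective of (P4) is bounded below by that of (P3). The bound is attained if eigenvectors for
  the \<open>B\<close> smallest eigenvalues of \<open>L\<close> can be chosen to vanish on the isolated vertices (which
  carry the eigenvalue \<open>1\<close>). The spectrum of a bipartite graph is symmetric about \<open>1\<close>, so
  this is possible as soon as at least \<open>2B\<close> vertices are not isolated, which is what the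
  positivity of the \<open>B\<close> largest row and column sums provides.
  Conversely, the \<open>B\<close> smallest eigenvalues of \<open>L\<close> vanish exactly when the non-isolated vertices
  split into at least \<open>B\<close> classes without edges between them, that is, when \<open>X\<close> is block
  diagonal with at least \<open>B\<close> blocks up to permutations; on such \<open>X\<close> the objectives of (P1) and
  (P3) agree.\<close>

section \<open>Spectral theorem for real symmetric matrices\<close>

lemma index_mult_mat_vec_sum:
  "A \<in> carrier_mat n m \<Longrightarrow> v \<in> carrier_vec m \<Longrightarrow> i < n \<Longrightarrow>
   (A *\<^sub>v v) $ i = (\<Sum>j<m. A $$ (i,j) * v $ j)"
  by (auto simp: scalar_prod_def atLeast0LessThan intro!: sum.cong)

lemma index_mult_mat_sum:
  "A \<in> carrier_mat nr n \<Longrightarrow> B \<in> carrier_mat n nc \<Longrightarrow> i < nr \<Longrightarrow> j < nc \<Longrightarrow>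
   (A * B) $$ (i,j) = (\<Sum>k<n. A $$ (i,k) * B $$ (k,j))"
  by (auto simp: scalar_prod_def atLeast0LessThan intro!: sum.cong)

lemma real_symmetric_complex_eigenvalue_real:
  fixes A :: "real mat" and v :: "complex vec"
  assumes sym: "\<And>i j. i < n \<Longrightarrow> j < n \<Longrightarrow> A $$ (i,j) = A $$ (j,i)"
    and v: "v \<in> carrier_vec n" "v \<noteq> 0\<^sub>v n"
    and ev: "\<And>i. i < n \<Longrightarrow> (\<Sum>j<n. complex_of_real (A $$ (i,j)) * v $ j) = a * v $ i"
  shows "Im a = 0"
proof -
  define s where "s = (\<Sum>i<n. cnj (v $ i) * (\<Sum>j<n. complex_of_real (A $$ (i,j)) * v $ j))"
  define N where "N = (\<Sum>i<n. (cmod (v $ i))^2)"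
  have s_eq: "s = a * complex_of_real N"
  proof -
    have "s = (\<Sum>i<n. a * (cnj (v $ i) * v $ i))" unfolding s_def
      by (rule sum.cong) (auto simp: ev)
    also have "\<dots> = a * (\<Sum>i<n. complex_of_real ((cmod (v $ i))^2))"
      by (simp add: sum_distrib_left mult.commute[of "cnj _"] complex_norm_square[symmetric]
          del: of_real_power)
    finally show ?thesis unfolding N_def by simp
  qed
  have s_real: "cnj s = s"
  proof -
    have "cnj s = (\<Sum>i<n. \<Sum>j<n. v $ i * complex_of_real (A $$ (i,j)) * cnj (v $ j))"
      unfolding s_def by (simp add: sum_distrib_left mult.assoc)
    also have "\<dots> = (\<Sum>j<n. \<Sum>i<n. v $ i * complex_of_real (A $$ (i,j)) * cnj (v $ j))"
      by (rule sum.swap)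
    also have "\<dots> = s" unfolding s_def sum_distrib_left
      by (intro sum.cong refl) (auto simp: sym mult.commute mult.left_commute)
    finally show ?thesis .
  qed
  have "N > 0"
  proof -
    from v obtain k where k: "k < n" "v $ k \<noteq> 0" by (auto simp: vec_eq_iff)
    have "(cmod (v $ k))^2 \<le> N" unfolding N_def by (rule member_le_sum) (use k in auto)
    moreover have "(cmod (v $ k))^2 > 0" using k by simp
    ultimately show ?thesis by linarith
  qed
  moreover have "Im a * N = 0"
    using s_eq arg_cong[OF s_real, of Im] by simp
  ultimately show ?thesis by simp
qed

lemma real_symmetric_has_eigenvector:
  fixes A :: "real mat"
  assumes A: "A \<in> carrier_mat n n" and n: "n > 0"
    and sym: "\<And>i j. i < n \<Longrightarrow> j < n \<Longrightarrow> A $$ (i,j) = A $$ (j,i)"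
  shows "\<exists>e v. v \<in> carrier_vec n \<and> v \<noteq> 0\<^sub>v n \<and> A *\<^sub>v v = e \<cdot>\<^sub>v v"
proof -
  define Ac where "Ac = map_mat complex_of_real A"
  have Ac: "Ac \<in> carrier_mat n n" using A by (auto simp: Ac_def)
  from char_poly_factorized[OF Ac] obtain as where
    cp: "char_poly Ac = (\<Prod>a\<leftarrow>as. [:- a, 1:])" and len: "length as = n" by auto
  from n len obtain a as' where as: "as = a # as'" by (cases as) auto
  have "eigenvalue Ac a"
    using eigenvalue_root_char_poly[OF Ac] unfolding cp as by simp
  then obtain vc where "eigenvector Ac vc a" unfolding eigenvalue_def by auto
  hence vc: "vc \<in> carrier_vec n" "vc \<noteq> 0\<^sub>v n" "Ac *\<^sub>v vc = a \<cdot>\<^sub>v vc"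
    unfolding eigenvector_def using Ac by auto
  have ev: "(\<Sum>j<n. complex_of_real (A $$ (i,j)) * vc $ j) = a * vc $ i" if i: "i < n" for i
  proof -
    have "(Ac *\<^sub>v vc) $ i = (a \<cdot>\<^sub>v vc) $ i" using vc by simp
    thus ?thesis using index_mult_mat_vec_sum[OF Ac vc(1) i] i A vc(1) by (simp add: Ac_def)
  qed
  have real: "Im a = 0" by (rule real_symmetric_complex_eigenvalue_real[OF sym vc(1,2) ev])
  have part_eigen: "A *\<^sub>v vec n (\<lambda>i. p (vc $ i)) = Re a \<cdot>\<^sub>v vec n (\<lambda>i. p (vc $ i))"
    if p: "p = Re \<or> p = Im" for p
  proof (rule eq_vecI)
    fix i assume "i < dim_vec (Re a \<cdot>\<^sub>v vec n (\<lambda>i. p (vc $ i)))"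
    hence i: "i < n" by simp
    have "p (\<Sum>j<n. complex_of_real (A $$ (i,j)) * vc $ j) = p (a * vc $ i)" using ev[OF i] by simp
    hence "(\<Sum>j<n. A $$ (i,j) * p (vc $ j)) = Re a * p (vc $ i)"
      using p real by (auto simp: Re_sum Im_sum)
    thus "(A *\<^sub>v vec n (\<lambda>i. p (vc $ i))) $ i = (Re a \<cdot>\<^sub>v vec n (\<lambda>i. p (vc $ i))) $ i"
      using index_mult_mat_vec_sum[OF A _ i, of "vec n (\<lambda>i. p (vc $ i))"] i by simp
  qed (use A in auto)
  from vc(1,2) obtain k where k: "k < n" "vc $ k \<noteq> 0" by (auto simp: vec_eq_iff)
  hence "Re (vc $ k) \<noteq> 0 \<or> Im (vc $ k) \<noteq> 0" using complex_eqI by force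
  then obtain p where p: "p = Re \<or> p = Im" "vec n (\<lambda>i. p (vc $ i)) \<noteq> 0\<^sub>v n"
    using k by (auto simp: vec_eq_iff)
  show ?thesis
    by (rule exI[of _ "Re a"], rule exI[of _ "vec n (\<lambda>i. p (vc $ i))"]) (use p part_eigen in auto)
qed

definition reflection_mat :: "nat \<Rightarrow> real \<Rightarrow> (nat \<Rightarrow> real) \<Rightarrow> real mat" where
  "reflection_mat n c w = mat n n (\<lambda>(i,j). (if i = j then 1 else 0) - c * w i * w j)"

lemma reflection_mat_carrier: "reflection_mat n c w \<in> carrier_mat n n"
  by (simp add: reflection_mat_def)

lemma transpose_reflection_mat: "(reflection_mat n c w)\<^sup>T = reflection_mat n c w"
  by (rule eq_matI) (auto simp: reflection_mat_def)

lemma reflection_mat_involution: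
  assumes c: "c * (\<Sum>k<n. (w k)^2) = 2"
  shows "reflection_mat n c w * reflection_mat n c w = 1\<^sub>m n"
proof (rule eq_matI)
  define H where "H = reflection_mat n c w"
  fix i j assume "i < dim_row (1\<^sub>m n)" "j < dim_col (1\<^sub>m n)"
  hence i: "i < n" and j: "j < n" by auto
  have "(H * H) $$ (i,j) = (\<Sum>k<n. H $$ (i,k) * H $$ (k,j))"
    by (rule index_mult_mat_sum) (use i j in \<open>auto simp: H_def reflection_mat_carrier\<close>)
  also have "\<dots> = (\<Sum>k<n. (if i = k then (if k = j then 1 else 0) else 0)
      - (if i = k then c * w k * w j else 0) - (if k = j then c * w i * w k else 0)
      + c * c * w i * w j * (w k)^2)"
    by (rule sum.cong[OF refl], use i j in \<open>auto simp: H_def reflection_mat_def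
        power2_eq_square algebra_simps\<close>)
  also have "\<dots> = (if i = j then 1 else 0) - 2 * (c * w i * w j)
      + (c * (\<Sum>k<n. (w k)^2)) * (c * w i * w j)"
    using i j by (simp add: sum.distrib sum_subtractf sum_distrib_left mult_ac)
  also have "\<dots> = (if i = j then 1 else 0)" unfolding c by simp
  finally show "(reflection_mat n c w * reflection_mat n c w) $$ (i,j) = 1\<^sub>m n $$ (i,j)"
    using i j by (simp add: H_def)
qed (auto simp: reflection_mat_def)

text \<open>The witness is the Householder reflection \<open>reflection_mat n (1 / (1 - v\<^sub>0)) (v - e\<^sub>0)\<close>.\<close>

lemma symmetric_involution_with_first_col:
  fixes v :: "real vec"
  assumes v: "v \<in> carrier_vec n" and n: "n > 0" and unit: "(\<Sum>i<n. (v $ i)^2) = 1"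
  shows "\<exists>H. H \<in> carrier_mat n n \<and> H\<^sup>T = H \<and> H * H = 1\<^sub>m n \<and> col H 0 = v"
proof (cases "v = unit_vec n 0")
  case True
  thus ?thesis using n by (intro exI[of _ "1\<^sub>m n"]) (auto simp: col_one)
next
  case False
  have v0: "v $ 0 \<noteq> 1"
  proof
    assume v01: "v $ 0 = 1"
    have "{..<n} = insert 0 {1..<n}" using n by auto
    hence "(\<Sum>i\<in>{1..<n}. (v $ i)^2) = 0" using unit v01 by simp
    hence "\<forall>i\<in>{1..<n}. v $ i = 0" by (subst (asm) sum_nonneg_eq_0_iff) auto
    hence "v = unit_vec n 0" using v v01 by (intro eq_vecI) (auto simp: unit_vec_def)
    thus False using False by simp
  qed
  define w where "w i = v $ i - (if i = 0 then 1 else 0)" for i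
  define c where "c = 1 / (1 - v $ 0)"
  have "(\<Sum>k<n. (w k)^2) = (\<Sum>k<n. (v $ k)^2) - 2 * (\<Sum>k<n. if k = 0 then v $ k else 0)
      + (\<Sum>k<n. if k = 0 then 1 else 0)"
    by (simp add: w_def power2_eq_square algebra_simps sum.distrib sum_subtractf
        sum_distrib_left if_distrib[of "\<lambda>x. _ * x"] cong: if_cong)
  also have "\<dots> = 2 - 2 * v $ 0" using n unit by simp
  finally have "c * (\<Sum>k<n. (w k)^2) = 2" using v0 by (simp add: c_def field_simps)
  note H = reflection_mat_carrier transpose_reflection_mat reflection_mat_involution[OF this]
  have "col (reflection_mat n c w) 0 = v"
  proof (rule eq_vecI)
    fix i assume "i < dim_vec v" hence i: "i < n" using v by simp
    have "c * w 0 = -1" using v0 by (simp add: c_def w_def field_simps)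
    hence "c * w i * w 0 = - w i" by (metis mult.commute mult_minus1 mult.left_commute)
    thus "col (reflection_mat n c w) 0 $ i = v $ i"
      using i n by (simp add: reflection_mat_def w_def)
  qed (use v n in \<open>auto simp: reflection_mat_def\<close>)
  thus ?thesis using H by blast
qed

lemma mult_four_block_diag_mat:
  assumes "A1 \<in> carrier_mat n1 n1" "A2 \<in> carrier_mat n2 n2"
    and "B1 \<in> carrier_mat n1 n1" "B2 \<in> carrier_mat n2 n2"
  shows "four_block_mat A1 (0\<^sub>m n1 n2) (0\<^sub>m n2 n1) A2 * four_block_mat B1 (0\<^sub>m n1 n2) (0\<^sub>m n2 n1) B2
       = four_block_mat (A1 * B1) (0\<^sub>m n1 n2) (0\<^sub>m n2 n1) (A2 * B2)"
  using assms by (simp add: mult_four_block_mat[OF assms(1) zero_carrier_mat zero_carrier_mat assms(2)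
        assms(3) zero_carrier_mat zero_carrier_mat assms(4)])

lemma transpose_four_block_diag_mat:
  assumes "A1 \<in> carrier_mat n1 n1" "A2 \<in> carrier_mat n2 n2"
  shows "(four_block_mat A1 (0\<^sub>m n1 n2) (0\<^sub>m n2 n1) A2)\<^sup>T
       = four_block_mat A1\<^sup>T (0\<^sub>m n1 n2) (0\<^sub>m n2 n1) A2\<^sup>T"
  using assms by (subst transpose_four_block_mat[of _ n1 n1 _ n2 _ n2]) auto

lemma real_symmetric_deflation:
  fixes A :: "real mat"
  assumes A: "A \<in> carrier_mat (Suc m) (Suc m)" and AT: "A\<^sup>T = A"
  shows "\<exists>H e A'. H \<in> carrier_mat (Suc m) (Suc m) \<and> H\<^sup>T = H \<and> H * H = 1\<^sub>m (Suc m) \<and>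
     A' \<in> carrier_mat m m \<and> A'\<^sup>T = A' \<and>
     H * A * H = four_block_mat (mat 1 1 (\<lambda>_. e)) (0\<^sub>m 1 m) (0\<^sub>m m 1) A'"
proof -
  define n where "n = Suc m"
  have A: "A \<in> carrier_mat n n" using A by (simp add: n_def)
  have sym: "A $$ (i,j) = A $$ (j,i)" if "i < n" "j < n" for i j
    using that A arg_cong[OF AT, of "\<lambda>M. M $$ (i,j)"] by simp
  obtain e v0 where v0: "v0 \<in> carrier_vec n" "v0 \<noteq> 0\<^sub>v n" "A *\<^sub>v v0 = e \<cdot>\<^sub>v v0"
    using real_symmetric_has_eigenvector[OF A _ sym] n_def by auto
  define N where "N = (\<Sum>i<n. (v0 $ i)^2)"
  have "N > 0"
  proof -
    from v0(1,2) obtain k where k: "k < n" "v0 $ k \<noteq> 0" by (auto simp: vec_eq_iff)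
    have "(v0 $ k)^2 \<le> N" unfolding N_def by (rule member_le_sum) (use k in auto)
    moreover have "(v0 $ k)^2 > 0" using k by simp
    ultimately show ?thesis by linarith
  qed
  define v where "v = (1 / sqrt N) \<cdot>\<^sub>v v0"
  have v: "v \<in> carrier_vec n" using v0 by (simp add: v_def)
  have "(\<Sum>i<n. (v $ i)^2) = (\<Sum>i<n. (v0 $ i)^2 / N)"
    by (rule sum.cong) (use v0 \<open>N > 0\<close> in \<open>auto simp: v_def power_divide\<close>)
  also have "\<dots> = 1" using \<open>N > 0\<close> by (simp add: N_def sum_divide_distrib[symmetric])
  finally obtain H where H: "H \<in> carrier_mat n n" "H\<^sup>T = H" "H * H = 1\<^sub>m n" "col H 0 = v"
    using symmetric_involution_with_first_col[OF v] n_def by auto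
  have Av: "A *\<^sub>v v = e \<cdot>\<^sub>v v"
    unfolding v_def using v0 A by (simp add: mult_mat_vec smult_smult_assoc mult.commute)
  define A1 where "A1 = H * A * H"
  have A1: "A1 \<in> carrier_mat n n" using H A by (simp add: A1_def)
  have "A1\<^sup>T = H\<^sup>T * (H * A)\<^sup>T" unfolding A1_def by (rule transpose_mult) (use H A in auto)
  also have "(H * A)\<^sup>T = A\<^sup>T * H\<^sup>T" by (rule transpose_mult) (use H A in auto)
  finally have A1T: "A1\<^sup>T = A1"
    unfolding H(2) AT A1_def using H A by (simp add: assoc_mult_mat[of _ n n _ n _ n])
  have Hv: "H *\<^sub>v v = unit_vec n 0"
  proof -
    have "H *\<^sub>v v = col (H * H) 0"
      unfolding H(4)[symmetric] by (rule col_mult2[symmetric]) (use H n_def in auto)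
    thus ?thesis using H n_def by (simp add: col_one)
  qed
  have "col A1 0 = (H * A) *\<^sub>v col H 0"
    unfolding A1_def by (rule col_mult2) (use H A n_def in auto)
  also have "\<dots> = H *\<^sub>v (A *\<^sub>v v)"
    unfolding H(4) by (rule assoc_mult_mat_vec) (use H A v in auto)
  also have "\<dots> = e \<cdot>\<^sub>v unit_vec n 0"
    unfolding Av Hv[symmetric] by (rule mult_mat_vec) (use H v in auto)
  finally have col0: "col A1 0 = e \<cdot>\<^sub>v unit_vec n 0" .
  have A1_col0: "A1 $$ (i,0) = (if i = 0 then e else 0)" if "i < n" for i
    using arg_cong[OF col0, of "\<lambda>x. x $ i"] that A1 n_def by (auto simp: unit_vec_def)
  have A1_sym: "A1 $$ (i,j) = A1 $$ (j,i)" if "i < n" "j < n" for i j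
    using that A1 arg_cong[OF A1T, of "\<lambda>M. M $$ (i,j)"] by simp
  define A' where "A' = mat m m (\<lambda>(i,j). A1 $$ (Suc i, Suc j))"
  have "A'\<^sup>T = A'" by (rule eq_matI) (auto simp: A'_def n_def intro!: A1_sym)
  moreover have "A1 = four_block_mat (mat 1 1 (\<lambda>_. e)) (0\<^sub>m 1 m) (0\<^sub>m m 1) A'"
  proof (rule eq_matI)
    fix i j assume "i < dim_row (four_block_mat (mat 1 1 (\<lambda>_. e)) (0\<^sub>m 1 m) (0\<^sub>m m 1) A')"
      "j < dim_col (four_block_mat (mat 1 1 (\<lambda>_. e)) (0\<^sub>m 1 m) (0\<^sub>m m 1) A')"
    hence i: "i < n" and j: "j < n" by (auto simp: A'_def n_def)
    show "A1 $$ (i,j) = four_block_mat (mat 1 1 (\<lambda>_. e)) (0\<^sub>m 1 m) (0\<^sub>m m 1) A' $$ (i,j)"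
      using A1_col0[OF i] A1_col0[OF j] A1_sym[OF i j] i j
      by (cases "i = 0"; cases "j = 0") (auto simp: A'_def n_def)
  qed (use A1 n_def in \<open>auto simp: A'_def\<close>)
  moreover have "A' \<in> carrier_mat m m" by (simp add: A'_def)
  ultimately show ?thesis using H unfolding n_def A1_def by blast
qed

lemma real_symmetric_diagonalization:
  fixes A :: "real mat"
  assumes "A \<in> carrier_mat n n" "A\<^sup>T = A"
  shows "\<exists>Q D. Q \<in> carrier_mat n n \<and> D \<in> carrier_mat n n \<and> Q\<^sup>T * Q = 1\<^sub>m n \<and>
    diagonal_mat D \<and> A * Q = Q * D"
  using assms
proof (induction n arbitrary: A)
  case 0
  show ?case
    by (rule exI[of _ "1\<^sub>m 0"], rule exI[of _ "0\<^sub>m 0 0"])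
       (use 0 in \<open>auto simp: diagonal_mat_def intro!: eq_matI\<close>)
next
  case (Suc m A)
  obtain H e A' where H: "H \<in> carrier_mat (Suc m) (Suc m)" "H\<^sup>T = H" "H * H = 1\<^sub>m (Suc m)"
    and A': "A' \<in> carrier_mat m m" "A'\<^sup>T = A'"
    and HAH: "H * A * H = four_block_mat (mat 1 1 (\<lambda>_. e)) (0\<^sub>m 1 m) (0\<^sub>m m 1) A'"
    using real_symmetric_deflation[OF Suc.prems] by blast
  obtain Q' D' where Q': "Q' \<in> carrier_mat m m" "D' \<in> carrier_mat m m" "Q'\<^sup>T * Q' = 1\<^sub>m m"
    "diagonal_mat D'" "A' * Q' = Q' * D'"
    using Suc.IH[OF A'] by blast
  define E where "E = mat 1 1 (\<lambda>_. e)"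
  define K where "K = four_block_mat (1\<^sub>m 1) (0\<^sub>m 1 m) (0\<^sub>m m 1) Q'"
  define D where "D = four_block_mat E (0\<^sub>m 1 m) (0\<^sub>m m 1) D'"
  have E: "E \<in> carrier_mat 1 1" by (simp add: E_def)
  have K: "K \<in> carrier_mat (Suc m) (Suc m)" unfolding K_def using Q' by auto
  have D: "D \<in> carrier_mat (Suc m) (Suc m)" unfolding D_def using Q' E by auto
  have A: "A \<in> carrier_mat (Suc m) (Suc m)" using Suc.prems by simp
  have KK: "K\<^sup>T * K = 1\<^sub>m (Suc m)"
    unfolding K_def using Q' four_block_one_mat[of 1 m]
    by (simp add: transpose_four_block_diag_mat mult_four_block_diag_mat)
  have HH: "H * (H * X) = X" if "X \<in> carrier_mat (Suc m) (Suc m)" for X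
    using H that by (simp add: assoc_mult_mat[of H "Suc m" "Suc m" H "Suc m" X "Suc m", symmetric])
  have orth: "(H * K)\<^sup>T * (H * K) = 1\<^sub>m (Suc m)"
    using H K KK HH[OF K] by (simp add: transpose_mult[of _ "Suc m" "Suc m"]
        assoc_mult_mat[of _ "Suc m" "Suc m" _ "Suc m" _ "Suc m"])
  have "A * (H * K) = H * ((H * A * H) * K)"
    using A H K HH[of "A * (H * K)"]
      by (simp add: assoc_mult_mat[of _ "Suc m" "Suc m" _ "Suc m" _ "Suc m"])
  also have "(H * A * H) * K = K * D"
    unfolding HAH K_def D_def E_def[symmetric] using Q' E A'
    by (simp add: mult_four_block_diag_mat)
  finally have "A * (H * K) = (H * K) * D"
    using H K D by (simp add: assoc_mult_mat[of _ "Suc m" "Suc m" _ "Suc m" _ "Suc m"])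
  moreover have "diagonal_mat D"
    using Q'(2,4) unfolding D_def diagonal_mat_def by (auto simp: E_def)
  ultimately show ?case using H K D orth by (intro exI[of _ "H * K"] exI[of _ D]) auto
qed

definition dot :: "nat \<Rightarrow> (nat \<Rightarrow> real) \<Rightarrow> (nat \<Rightarrow> real) \<Rightarrow> real" where
  "dot n x y = (\<Sum>k<n. x k * y k)"

definition mat_app :: "nat \<Rightarrow> real mat \<Rightarrow> (nat \<Rightarrow> real) \<Rightarrow> nat \<Rightarrow> real" where
  "mat_app n M x = (\<lambda>r. \<Sum>k<n. M $$ (r,k) * x k)"

definition symmetric_mat :: "nat \<Rightarrow> real mat \<Rightarrow> bool" where
  "symmetric_mat n M \<longleftrightarrow> (\<forall>i<n. \<forall>j<n. M $$ (i,j) = M $$ (j,i))"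

definition orthonormal :: "nat \<Rightarrow> 'a set \<Rightarrow> ('a \<Rightarrow> nat \<Rightarrow> real) \<Rightarrow> bool" where
  "orthonormal n J w \<longleftrightarrow> (\<forall>i\<in>J. \<forall>j\<in>J. dot n (w i) (w j) = (if i = j then 1 else 0))"

definition orthonormal_eigenbasis ::
    "nat \<Rightarrow> real mat \<Rightarrow> (nat \<Rightarrow> nat \<Rightarrow> real) \<Rightarrow> (nat \<Rightarrow> real) \<Rightarrow> bool" where
  "orthonormal_eigenbasis n M q lam \<longleftrightarrow> orthonormal n {..<n} q \<and>
     (\<forall>i<n. \<forall>r<n. mat_app n M (q i) r = lam i * q i r) \<and>
     (\<forall>r<n. \<forall>s<n. (\<Sum>i<n. q i r * q i s) = (if r = s then 1 else 0))"

lemma dot_commute: "dot n x y = dot n y x"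
  by (simp add: dot_def mult.commute)

lemma dot_cong:
  "(\<And>v. v < n \<Longrightarrow> x v = x' v) \<Longrightarrow> (\<And>v. v < n \<Longrightarrow> y v = y' v) \<Longrightarrow> dot n x y = dot n x' y'"
  unfolding dot_def by (rule sum.cong) auto

lemma mat_app_cong: "(\<And>v. v < n \<Longrightarrow> x v = x' v) \<Longrightarrow> mat_app n M x r = mat_app n M x' r"
  unfolding mat_app_def by (rule sum.cong) auto

lemma orthonormal_subset: "orthonormal n J w \<Longrightarrow> I \<subseteq> J \<Longrightarrow> orthonormal n I w"
  unfolding orthonormal_def by blast

lemma eigenbasis_expansion:
  assumes E: "orthonormal_eigenbasis n M q lam" and r: "r < n"
  shows "x r = (\<Sum>i<n. dot n x (q i) * q i r)"
proof -
  have "(\<Sum>i<n. dot n x (q i) * q i r) = (\<Sum>i<n. \<Sum>k<n. x k * (q i k * q i r))"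
    by (simp add: dot_def sum_distrib_right mult.assoc)
  also have "\<dots> = (\<Sum>k<n. x k * (\<Sum>i<n. q i k * q i r))"
    by (subst sum.swap) (simp add: sum_distrib_left)
  also have "\<dots> = (\<Sum>k<n. x k * (if k = r then 1 else 0))"
    using E r unfolding orthonormal_eigenbasis_def by (intro sum.cong) auto
  also have "\<dots> = x r" using r by (simp add: if_distrib cong: if_cong)
  finally show ?thesis by simp
qed

lemma eigenbasis_parseval:
  assumes E: "orthonormal_eigenbasis n M q lam"
  shows "dot n x y = (\<Sum>i<n. dot n x (q i) * dot n y (q i))"
proof -
  have "dot n x y = (\<Sum>r<n. (\<Sum>i<n. dot n x (q i) * q i r) * y r)"
    unfolding dot_def[of n x y]
  proof (rule sum.cong[OF refl])
    fix r assume "r \<in> {..<n}"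
    thus "x r * y r = (\<Sum>i<n. dot n x (q i) * q i r) * y r"
      using eigenbasis_expansion[OF E, of r x] by simp
  qed
  also have "\<dots> = (\<Sum>i<n. dot n x (q i) * (\<Sum>r<n. y r * q i r))"
    by (simp add: sum_distrib_right sum_distrib_left mult_ac) (rule sum.swap)
  also have "\<dots> = (\<Sum>i<n. dot n x (q i) * dot n y (q i))" by (simp add: dot_def)
  finally show ?thesis .
qed

lemma dot_mat_app_symmetric:
  assumes "symmetric_mat n M"
  shows "dot n x (mat_app n M y) = dot n (mat_app n M x) y"
proof -
  have "dot n x (mat_app n M y) = (\<Sum>r<n. \<Sum>k<n. x r * M $$ (r,k) * y k)"
    by (simp add: dot_def mat_app_def sum_distrib_left mult.assoc)
  also have "\<dots> = (\<Sum>k<n. \<Sum>r<n. x r * M $$ (r,k) * y k)" by (rule sum.swap)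
  also have "\<dots> = dot n (mat_app n M x) y"
    unfolding dot_def mat_app_def sum_distrib_right
    by (intro sum.cong refl) (use assms in \<open>auto simp: symmetric_mat_def mult_ac\<close>)
  finally show ?thesis .
qed

lemma dot_eigenvector:
  assumes "\<And>r. r < n \<Longrightarrow> mat_app n M p r = \<mu> * p r"
  shows "dot n x (mat_app n M p) = \<mu> * dot n x p"
  unfolding dot_def by (simp add: assms sum_distrib_left mult_ac)

lemma eigenbasis_eigenvector:
  "orthonormal_eigenbasis n M q lam \<Longrightarrow> i < n \<Longrightarrow> r < n \<Longrightarrow> mat_app n M (q i) r = lam i * q i r"
  unfolding orthonormal_eigenbasis_def by blast

lemma eigenbasis_orthonormal:
  "orthonormal_eigenbasis n M q lam \<Longrightarrow> I \<subseteq> {..<n} \<Longrightarrow> orthonormal n I q"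
  unfolding orthonormal_eigenbasis_def using orthonormal_subset by blast

lemma eigenbasis_quad_form:
  assumes "orthonormal_eigenbasis n M q lam" and "i < n"
  shows "dot n (q i) (mat_app n M (q i)) = lam i"
proof -
  have "dot n (q i) (mat_app n M (q i)) = lam i * dot n (q i) (q i)"
    by (rule dot_eigenvector) (rule eigenbasis_eigenvector[OF assms])
  also have "dot n (q i) (q i) = 1"
    using assms by (simp add: orthonormal_eigenbasis_def orthonormal_def)
  finally show ?thesis by simp
qed

lemma eigenbasis_rayleigh:
  assumes E: "orthonormal_eigenbasis n M q lam" and S: "symmetric_mat n M"
  shows "dot n x (mat_app n M x) = (\<Sum>i<n. lam i * (dot n x (q i))^2)"
proof -
  have "dot n (mat_app n M x) (q i) = lam i * dot n x (q i)" if "i < n" for i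
    using dot_mat_app_symmetric[OF S, of x "q i"] dot_eigenvector[of n M "q i" "lam i" x]
      eigenbasis_eigenvector[OF E that] by simp
  hence "(\<Sum>i<n. dot n x (q i) * dot n (mat_app n M x) (q i)) = (\<Sum>i<n. lam i * (dot n x (q i))^2)"
    by (intro sum.cong) (auto simp: power2_eq_square)
  thus ?thesis using eigenbasis_parseval[OF E, of x "mat_app n M x"] by simp
qed

lemma bessel_inequality:
  assumes O: "orthonormal n J w" and J: "finite J"
  shows "(\<Sum>j\<in>J. (dot n x (w j))^2) \<le> dot n x x"
proof -
  define c where "c j = dot n x (w j)" for j
  define z where "z r = (\<Sum>j\<in>J. c j * w j r)" for r
  have xz: "dot n x z = (\<Sum>j\<in>J. (c j)^2)"
  proof -
    have "dot n x z = (\<Sum>j\<in>J. c j * dot n x (w j))"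
      unfolding dot_def z_def by (simp add: sum_distrib_left sum.swap[of _ "{..<n}"] mult_ac)
    thus ?thesis by (simp add: c_def power2_eq_square)
  qed
  have "dot n z z = (\<Sum>j\<in>J. c j * dot n (w j) z)"
    unfolding dot_def z_def
    by (simp add: sum_distrib_left sum_distrib_right sum.swap[of _ "{..<n}"] mult_ac)
  also have "\<dots> = (\<Sum>j\<in>J. c j * (\<Sum>l\<in>J. c l * dot n (w j) (w l)))"
    unfolding z_def dot_def by (simp add: sum_distrib_left sum.swap[of _ "{..<n}"] mult_ac)
  also have "\<dots> = (\<Sum>j\<in>J. c j * (\<Sum>l\<in>J. c l * (if j = l then 1 else 0)))"
    using O unfolding orthonormal_def by (intro sum.cong refl) auto
  also have "\<dots> = (\<Sum>j\<in>J. (c j)^2)"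
    using J by (simp add: power2_eq_square if_distrib cong: if_cong)
  finally have zz: "dot n z z = (\<Sum>j\<in>J. (c j)^2)" .
  have "0 \<le> (\<Sum>r<n. (x r - z r)^2)" by (simp add: sum_nonneg)
  also have "\<dots> = dot n x x - 2 * dot n x z + dot n z z"
    by (simp add: dot_def power2_eq_square algebra_simps sum.distrib sum_subtractf sum_distrib_left)
  finally show ?thesis using xz zz by (simp add: c_def)
qed

text \<open>Hypothesis \<open>span\<close> is Parseval's identity: every \<open>p j\<close> lies in the span of the \<open>e c\<close>.\<close>

lemma orthonormal_card_le:
  assumes p: "orthonormal n J p" "finite J" and e: "orthonormal n I e" "finite I"
    and span: "\<And>j. j \<in> J \<Longrightarrow> dot n (p j) (p j) = (\<Sum>c\<in>I. (dot n (p j) (e c))^2)"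
  shows "card J \<le> card I"
proof -
  have "real (card J) = (\<Sum>j\<in>J. dot n (p j) (p j))" using p unfolding orthonormal_def by simp
  also have "\<dots> = (\<Sum>c\<in>I. \<Sum>j\<in>J. (dot n (e c) (p j))^2)"
    by (simp add: span sum.swap[of _ J] dot_commute)
  also have "\<dots> \<le> (\<Sum>c\<in>I. dot n (e c) (e c))" by (rule sum_mono) (rule bessel_inequality[OF p])
  also have "\<dots> = real (card I)" using e unfolding orthonormal_def by simp
  finally show ?thesis by simp
qed

lemma dot_eigenvector_eigenbasis_eq_0:
  assumes E: "orthonormal_eigenbasis n M q lam" and S: "symmetric_mat n M" and i: "i < n"
    and p: "\<And>r. r < n \<Longrightarrow> mat_app n M p r = \<mu> * p r" and ne: "lam i \<noteq> \<mu>"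
  shows "dot n p (q i) = 0"
proof -
  have "lam i * dot n p (q i) = dot n p (mat_app n M (q i))"
    using dot_eigenvector[of n M "q i" "lam i" p] eigenbasis_eigenvector[OF E i] by simp
  also have "\<dots> = dot n (mat_app n M p) (q i)" by (rule dot_mat_app_symmetric[OF S])
  also have "\<dots> = dot n (q i) (mat_app n M p)" by (rule dot_commute)
  also have "\<dots> = \<mu> * dot n p (q i)" by (simp add: dot_eigenvector[OF p] dot_commute)
  finally show ?thesis using ne by simp
qed

lemma eigenvector_parseval:
  assumes E: "orthonormal_eigenbasis n M q lam" and S: "symmetric_mat n M"
    and p: "\<And>r. r < n \<Longrightarrow> mat_app n M p r = \<mu> * p r" and P: "P \<mu>"
  shows "dot n p p = (\<Sum>i\<in>{i. i < n \<and> P (lam i)}. (dot n p (q i))^2)"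
proof -
  have "dot n p p = (\<Sum>i<n. (dot n p (q i))^2)"
    using eigenbasis_parseval[OF E, of p p] by (simp add: power2_eq_square)
  also have "\<dots> = (\<Sum>i\<in>{i. i < n \<and> P (lam i)}. (dot n p (q i))^2)"
    by (rule sum.mono_neutral_right)
       (use P dot_eigenvector_eigenbasis_eq_0[OF E S _ p] in \<open>auto simp: power2_eq_square\<close>)
  finally show ?thesis .
qed

lemma sum_initial_le_weighted_sum:
  fixes lam p :: "nat \<Rightarrow> real"
  assumes sorted: "mono_on {..<n} lam"
    and p: "\<And>i. i < n \<Longrightarrow> 0 \<le> p i" "\<And>i. i < n \<Longrightarrow> p i \<le> 1"
    and ps: "(\<Sum>i<n. p i) = real B" and B: "B \<le> n"
  shows "(\<Sum>i<B. lam i) \<le> (\<Sum>i<n. lam i * p i)"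
proof (cases "B = 0")
  case True
  hence "\<forall>i<n. p i = 0" using ps p(1) sum_nonneg_eq_0_iff[of "{..<n}" p] by auto
  thus ?thesis using True by simp
next
  case False
  define t where "t = lam (B - 1)"
  have split: "{..<n} = {..<B} \<union> {B..<n}" using B by auto
  have low: "t * (p i - 1) \<le> lam i * (p i - 1)" if "i < B" for i
    using mono_onD[OF sorted, of i "B - 1"] p(2)[of i] that B
    by (simp add: t_def mult_right_mono_neg)
  have high: "t * p i \<le> lam i * p i" if "B \<le> i" "i < n" for i
    using mono_onD[OF sorted, of "B - 1" i] p(1)[of i] that False
    by (simp add: t_def mult_right_mono)
  have "(\<Sum>i<n. lam i * p i) - (\<Sum>i<B. lam i)
      = (\<Sum>i<B. lam i * (p i - 1)) + (\<Sum>i\<in>{B..<n}. lam i * p i)"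
    unfolding split by (subst sum.union_disjoint) (auto simp: algebra_simps sum_subtractf)
  also have "\<dots> \<ge> (\<Sum>i<B. t * (p i - 1)) + (\<Sum>i\<in>{B..<n}. t * p i)"
    using low high by (intro add_mono sum_mono) auto
  also have "(\<Sum>i<B. t * (p i - 1)) + (\<Sum>i\<in>{B..<n}. t * p i) = t * ((\<Sum>i<n. p i) - B)"
    unfolding split
      by (subst sum.union_disjoint) (auto simp: sum_subtractf algebra_simps sum_distrib_left)
  finally show ?thesis using ps by simp
qed

lemma ky_fan_min_principle:
  assumes E: "orthonormal_eigenbasis n M q lam" and S: "symmetric_mat n M"
    and sorted: "mono_on {..<n} lam" and O: "orthonormal n {..<B} w" and B: "B \<le> n"
  shows "(\<Sum>i<B. lam i) \<le> (\<Sum>j<B. dot n (w j) (mat_app n M (w j)))"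
proof -
  define p where "p i = (\<Sum>j<B. (dot n (w j) (q i))^2)" for i
  have "(\<Sum>j<B. dot n (w j) (mat_app n M (w j))) = (\<Sum>i<n. lam i * p i)"
    unfolding eigenbasis_rayleigh[OF E S] p_def
    by (subst sum.swap) (simp add: sum_distrib_left)
  moreover have "p i \<le> 1" if "i < n" for i
    using bessel_inequality[OF O, of "q i"] E that
    by (simp add: p_def dot_commute orthonormal_eigenbasis_def orthonormal_def)
  moreover have "(\<Sum>i<n. p i) = real B"
    using O unfolding p_def
    by (subst sum.swap) (simp add: eigenbasis_parseval[OF E, of "w _" "w _", symmetric]
        power2_eq_square orthonormal_def)
  ultimately show ?thesis
    using sum_initial_le_weighted_sum[OF sorted _ _ _ B, of p] by (simp add: p_def sum_nonneg)
qed

lemma orthogonal_mat_permuted_columns: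
  fixes Q :: "real mat"
  assumes Q: "Q \<in> carrier_mat n n" "Q\<^sup>T * Q = 1\<^sub>m n" and f: "bij_betw f {..<n} {..<n}"
  defines "q \<equiv> \<lambda>i k. Q $$ (k, f i)"
  shows "orthonormal n {..<n} q"
    and "\<And>r s. r < n \<Longrightarrow> s < n \<Longrightarrow> (\<Sum>i<n. q i r * q i s) = (if r = s then 1 else 0)"
proof -
  have fi: "f i < n" if "i < n" for i using f that by (auto dest: bij_betwE)
  have finj: "f i = f j \<longleftrightarrow> i = j" if "i < n" "j < n" for i j
    using f that unfolding bij_betw_def inj_on_def by auto
  show "orthonormal n {..<n} q"
    unfolding orthonormal_def
  proof (intro ballI)
    fix i j assume "i \<in> {..<n}" "j \<in> {..<n}"
    hence i: "i < n" and j: "j < n" by auto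
    have "dot n (q i) (q j) = (Q\<^sup>T * Q) $$ (f i, f j)"
      unfolding dot_def q_def using Q fi i j by (subst index_mult_mat_sum[of _ n n]) auto
    thus "dot n (q i) (q j) = (if i = j then 1 else 0)" using Q fi[OF i] fi[OF j] finj[OF i j] by simp
  qed
  have QQT: "Q * Q\<^sup>T = 1\<^sub>m n" by (rule mat_mult_left_right_inverse[OF _ _ Q(2)]) (use Q in auto)
  fix r s assume r: "r < n" and s: "s < n"
  have "(\<Sum>i<n. q i r * q i s) = (\<Sum>k\<in>f ` {..<n}. Q $$ (r,k) * Q $$ (s,k))"
    using sum.reindex[of f "{..<n}" "\<lambda>k. Q $$ (r,k) * Q $$ (s,k)"] f
    unfolding q_def bij_betw_def by simp
  also have "\<dots> = (Q * Q\<^sup>T) $$ (r,s)"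
    using f Q r s by (subst index_mult_mat_sum[of _ n n]) (auto simp: bij_betw_def intro!: sum.cong)
  finally show "(\<Sum>i<n. q i r * q i s) = (if r = s then 1 else 0)" using QQT r s by simp
qed

lemma proots_linear_factors: "proots (\<Prod>a\<leftarrow>ds. [:- a, 1:]) = mset (ds :: real list)"
proof (induction ds)
  case (Cons a ds)
  have nz: "(\<Prod>x\<leftarrow>ds. [:- x, 1:]) \<noteq> (0 :: real poly)" by (auto simp: prod_list_zero_iff)
  have "proots (\<Prod>x\<leftarrow>a # ds. [:- x, 1:]) = proots ([:- a, 1:] * (\<Prod>x\<leftarrow>ds. [:- x, 1:]))"
    by (simp only: list.map prod_list.Cons)
  also have "\<dots> = proots [:- a, 1:] + proots (\<Prod>x\<leftarrow>ds. [:- x, 1:])"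
    by (rule proots_mult) (use nz in auto)
  also have "\<dots> = add_mset a (mset ds)" using Cons.IH by (simp add: proots_linear_factor)
  finally show ?case by simp
qed simp

lemma symmetric_mat_sorted_eigenbasis:
  fixes M :: "real mat"
  assumes M: "M \<in> carrier_mat n n" and S: "symmetric_mat n M"
  shows "\<exists>q lam. orthonormal_eigenbasis n M q lam \<and> mono_on {..<n} lam \<and>
     (\<forall>i<n. sorted_eigenvalues M ! i = lam i)"
proof -
  have "M\<^sup>T = M" by (rule eq_matI) (use M S in \<open>auto simp: symmetric_mat_def\<close>)
  then obtain Q D where QD: "Q \<in> carrier_mat n n" "D \<in> carrier_mat n n" "Q\<^sup>T * Q = 1\<^sub>m n"
    "diagonal_mat D" "M * Q = Q * D"
    using real_symmetric_diagonalization[OF M] by blast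
  have QQT: "Q * Q\<^sup>T = 1\<^sub>m n" by (rule mat_mult_left_right_inverse[OF _ _ QD(3)]) (use QD in auto)
  have "M = M * (Q * Q\<^sup>T)" using M QQT by simp
  also have "\<dots> = (M * Q) * Q\<^sup>T" by (rule assoc_mult_mat[symmetric]) (use M QD in auto)
  finally have "similar_mat M D"
    using M QD QQT by (intro similar_matI[where P = Q and Q = "Q\<^sup>T" and n = n]) auto
  hence "char_poly M = char_poly D" by (rule char_poly_similar)
  also have "upper_triangular D" using QD(2,4) by (auto simp: upper_triangular_def diagonal_mat_def)
  hence "char_poly D = (\<Prod>a\<leftarrow>diag_mat D. [:- a, 1:])" by (rule char_poly_upper_triangular[OF QD(2)])
  finally have cp: "char_poly M = (\<Prod>a\<leftarrow>diag_mat D. [:- a, 1:])" .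
  have se: "sorted_eigenvalues M = sort (diag_mat D)"
    unfolding sorted_eigenvalues_def cp proots_linear_factors by simp
  have len: "length (diag_mat D) = n" using QD(2) by (simp add: diag_mat_def)
  obtain f where f: "bij_betw f {..<n} {..<n}" "\<forall>i<n. sort (diag_mat D) ! i = diag_mat D ! f i"
    using permutation_Ex_bij[of "sort (diag_mat D)" "diag_mat D"] len by auto
  define q where "q i k = Q $$ (k, f i)" for i k
  define lam where "lam i = sort (diag_mat D) ! i" for i
  have eig: "mat_app n M (q i) r = lam i * q i r" if i: "i < n" and r: "r < n" for i r
  proof -
    have fi: "f i < n" using f i by (auto dest: bij_betwE)
    have "mat_app n M (q i) r = (M * Q) $$ (r, f i)"
      unfolding mat_app_def q_def by (rule index_mult_mat_sum[symmetric]) (use M QD fi r in auto)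
    also have "\<dots> = (\<Sum>k<n. Q $$ (r,k) * D $$ (k, f i))"
      unfolding QD(5) by (rule index_mult_mat_sum) (use QD fi r in auto)
    also have "\<dots> = (\<Sum>k<n. if k = f i then Q $$ (r,k) * D $$ (k, f i) else 0)"
    proof (rule sum.cong[OF refl])
      fix k assume "k \<in> {..<n}"
      thus "Q $$ (r,k) * D $$ (k, f i) = (if k = f i then Q $$ (r,k) * D $$ (k, f i) else 0)"
        using QD(2,4) fi by (auto simp: diagonal_mat_def)
    qed
    also have "\<dots> = Q $$ (r, f i) * D $$ (f i, f i)" using fi by simp
    finally show ?thesis
      using f(2) i fi QD(2) by (simp add: q_def lam_def diag_mat_def)
  qed
  have "mono_on {..<n} lam"
    unfolding lam_def using len by (intro mono_onI sorted_nth_mono) auto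
  moreover have "\<forall>i<n. sorted_eigenvalues M ! i = lam i" by (simp add: se lam_def)
  ultimately show ?thesis
    using orthogonal_mat_permuted_columns[OF QD(1,3) f(1)] eig
    unfolding orthonormal_eigenbasis_def q_def[abs_def] by blast
qed

section \<open>The normalized Laplacian of a weighted graph\<close>

definition adjacency_mat :: "nat \<Rightarrow> real mat \<Rightarrow> bool" where
  "adjacency_mat n A \<longleftrightarrow>
     A \<in> carrier_mat n n \<and> symmetric_mat n A \<and> (\<forall>i<n. \<forall>j<n. A $$ (i,j) \<ge> 0)"

definition vertex_deg :: "real mat \<Rightarrow> nat \<Rightarrow> real" where
  "vertex_deg A i = (\<Sum>j<dim_col A. A $$ (i,j))"

definition inv_sqrt_deg :: "real mat \<Rightarrow> nat \<Rightarrow> real" where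
  "inv_sqrt_deg A i = (if vertex_deg A i \<noteq> 0 then 1 / sqrt (vertex_deg A i) else 0)"

definition isolated_vertices :: "nat \<Rightarrow> real mat \<Rightarrow> nat set" where
  "isolated_vertices n A = {i. i < n \<and> vertex_deg A i = 0}"

lemma index_deg: "A \<in> carrier_mat n n \<Longrightarrow> i < n \<Longrightarrow> deg A $ i = vertex_deg A i"
  unfolding deg_def vertex_deg_def using index_mult_mat_vec_sum[of A n n "vec n (\<lambda>_. 1)" i] by simp

lemma dim_deg: "A \<in> carrier_mat n n \<Longrightarrow> dim_vec (deg A) = n"
  unfolding deg_def by simp

lemma vertex_deg_nonneg: "adjacency_mat n A \<Longrightarrow> i < n \<Longrightarrow> vertex_deg A i \<ge> 0"
  unfolding adjacency_mat_def vertex_deg_def by (auto intro: sum_nonneg)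

lemma vertex_deg_pos:
  assumes A: "adjacency_mat n A" and ij: "i < n" "j < n" "A $$ (i,j) \<noteq> 0"
  shows "vertex_deg A i > 0"
proof -
  have "A $$ (i,j) \<le> vertex_deg A i"
    using A ij unfolding adjacency_mat_def vertex_deg_def by (intro member_le_sum) auto
  thus ?thesis using A ij unfolding adjacency_mat_def by (metis less_eq_real_def order_le_less_trans)
qed

lemma vertex_deg_pos':
  "adjacency_mat n A \<Longrightarrow> i < n \<Longrightarrow> j < n \<Longrightarrow> A $$ (i,j) \<noteq> 0 \<Longrightarrow> vertex_deg A j > 0"
  using vertex_deg_pos[of n A j i] by (auto simp: adjacency_mat_def symmetric_mat_def)

lemma inv_sqrt_deg_mult_sqrt: "vertex_deg A i > 0 \<Longrightarrow> inv_sqrt_deg A i * sqrt (vertex_deg A i) = 1"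
  by (simp add: inv_sqrt_deg_def)

lemma index_L_sym:
  assumes A: "A \<in> carrier_mat n n" and ij: "i < n" "j < n"
  shows "L_sym A $$ (i,j)
      = (if i = j then 1 else 0) - inv_sqrt_deg A i * A $$ (i,j) * inv_sqrt_deg A j"
proof -
  define S where "S = deg_inv_sqrt A"
  have S: "S \<in> carrier_mat n n" using A by (simp add: S_def deg_inv_sqrt_def)
  have S_idx: "S $$ (a,b) = (if a = b then inv_sqrt_deg A a else 0)" if "a < n" "b < n" for a b
    using that A by (simp add: S_def deg_inv_sqrt_def inv_sqrt_deg_def index_deg)
  have SA: "(S * A) $$ (i,k) = inv_sqrt_deg A i * A $$ (i,k)" if k: "k < n" for k
  proof -
    have "(S * A) $$ (i,k) = (\<Sum>l<n. S $$ (i,l) * A $$ (l,k))"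
      by (rule index_mult_mat_sum[OF S A ij(1) k])
    also have "\<dots> = (\<Sum>l<n. if l = i then inv_sqrt_deg A i * A $$ (l,k) else 0)"
      by (rule sum.cong) (auto simp: S_idx ij)
    finally show ?thesis using ij by simp
  qed
  have "(S * A * S) $$ (i,j) = (\<Sum>k<n. (S * A) $$ (i,k) * S $$ (k,j))"
    by (rule index_mult_mat_sum) (use S A ij in auto)
  also have "\<dots> = (\<Sum>k<n. if k = j then inv_sqrt_deg A i * A $$ (i,k) * inv_sqrt_deg A j else 0)"
    by (rule sum.cong) (auto simp: S_idx SA ij)
  finally have "(S * A * S) $$ (i,j) = inv_sqrt_deg A i * A $$ (i,j) * inv_sqrt_deg A j"
    using ij by simp
  thus ?thesis unfolding L_sym_def S_def[symmetric] using A ij S by simp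
qed

lemma L_sym_carrier: "A \<in> carrier_mat n n \<Longrightarrow> L_sym A \<in> carrier_mat n n"
  unfolding L_sym_def deg_inv_sqrt_def by auto

lemma symmetric_L_sym: "adjacency_mat n A \<Longrightarrow> symmetric_mat n (L_sym A)"
  unfolding symmetric_mat_def adjacency_mat_def by (auto simp: index_L_sym)

lemma mat_app_L_sym:
  assumes "A \<in> carrier_mat n n" and "r < n"
  shows "mat_app n (L_sym A) x r
      = x r - inv_sqrt_deg A r * (\<Sum>k<n. A $$ (r,k) * (inv_sqrt_deg A k * x k))"
proof -
  have "mat_app n (L_sym A) x r = (\<Sum>k<n. (if r = k then x k else 0)
      - inv_sqrt_deg A r * (A $$ (r,k) * (inv_sqrt_deg A k * x k)))"
    unfolding mat_app_def by (rule sum.cong) (use assms in \<open>auto simp: index_L_sym algebra_simps\<close>)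
  thus ?thesis using assms(2) by (simp add: sum_subtractf sum_distrib_left)
qed

lemma L_sym_quad_form:
  assumes "A \<in> carrier_mat n n"
  shows "dot n x (mat_app n (L_sym A) x) = dot n x x
    - (\<Sum>i<n. \<Sum>j<n. A $$ (i,j) * ((inv_sqrt_deg A i * x i) * (inv_sqrt_deg A j * x j)))"
  unfolding dot_def using assms
    by (simp add: mat_app_L_sym algebra_simps sum_subtractf sum_distrib_left)

lemma L_sym_quad_form_expansions:
  fixes x :: "nat \<Rightarrow> real"
  assumes A: "adjacency_mat n A"
  defines "y \<equiv> \<lambda>i. inv_sqrt_deg A i * x i"
  defines "I \<equiv> (\<Sum>i\<in>isolated_vertices n A. (x i)^2)"
  shows "dot n x (mat_app n (L_sym A) x) = I + (\<Sum>i<n. \<Sum>j<n. A $$ (i,j) * (y i - y j)^2) / 2"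
    and "dot n x (mat_app n (L_sym A) x)
         = 2 * dot n x x - I - (\<Sum>i<n. \<Sum>j<n. A $$ (i,j) * (y i + y j)^2) / 2"
proof -
  have c: "A \<in> carrier_mat n n" and sy: "symmetric_mat n A" using A by (auto simp: adjacency_mat_def)
  define S1 where "S1 = (\<Sum>i<n. \<Sum>j<n. A $$ (i,j) * (y i)^2)"
  define S2 where "S2 = (\<Sum>i<n. \<Sum>j<n. A $$ (i,j) * (y i * y j))"
  have deg_y: "vertex_deg A i * (y i)^2 = (if vertex_deg A i = 0 then 0 else (x i)^2)" if "i < n" for i
    using vertex_deg_nonneg[OF A that]
    by (auto simp: y_def inv_sqrt_deg_def power_mult_distrib power_divide)
  have "dot n x x = (\<Sum>i<n. (if vertex_deg A i = 0 then (x i)^2 else 0))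
      + (\<Sum>i<n. (if vertex_deg A i = 0 then 0 else (x i)^2))"
    unfolding dot_def sum.distrib[symmetric] by (rule sum.cong) (auto simp: power2_eq_square)
  also have "(\<Sum>i<n. (if vertex_deg A i = 0 then (x i)^2 else 0)) = I"
    unfolding I_def isolated_vertices_def by (simp add: sum.inter_filter[symmetric] lessThan_def)
  also have "S1 = (\<Sum>i<n. vertex_deg A i * (y i)^2)"
    using c by (simp add: S1_def vertex_deg_def sum_distrib_right)
  hence "(\<Sum>i<n. (if vertex_deg A i = 0 then 0 else (x i)^2)) = S1" by (simp add: deg_y)
  finally have xx: "dot n x x = I + S1" .
  have xLx: "dot n x (mat_app n (L_sym A) x) = dot n x x - S2"
    unfolding S2_def y_def by (rule L_sym_quad_form[OF c])
  have S1': "(\<Sum>i<n. \<Sum>j<n. A $$ (i,j) * (y j)^2) = S1"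
    unfolding S1_def using sy
    by (subst sum.swap) (auto simp: symmetric_mat_def intro!: sum.cong)
  have "(\<Sum>i<n. \<Sum>j<n. A $$ (i,j) * (y i - y j)^2) = S1 + S1 - 2 * S2"
    unfolding S1_def S2_def using S1'[unfolded S1_def]
    by (simp add: power2_eq_square algebra_simps sum.distrib sum_subtractf sum_distrib_left)
  moreover have "(\<Sum>i<n. \<Sum>j<n. A $$ (i,j) * (y i + y j)^2) = S1 + S1 + 2 * S2"
    unfolding S1_def S2_def using S1'[unfolded S1_def]
    by (simp add: power2_eq_square algebra_simps sum.distrib sum_distrib_left)
  ultimately show "dot n x (mat_app n (L_sym A) x) = I + (\<Sum>i<n. \<Sum>j<n. A $$ (i,j) * (y i - y j)^2) / 2"
    and "dot n x (mat_app n (L_sym A) x)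
        = 2 * dot n x x - I - (\<Sum>i<n. \<Sum>j<n. A $$ (i,j) * (y i + y j)^2) / 2"
    using xx xLx by (simp_all add: field_simps)
qed

lemma L_sym_quad_form_ge:
  assumes "adjacency_mat n A"
  shows "dot n x (mat_app n (L_sym A) x) \<ge> (\<Sum>i\<in>isolated_vertices n A. (x i)^2)"
  unfolding L_sym_quad_form_expansions(1)[OF assms]
  using assms by (auto simp: adjacency_mat_def intro!: sum_nonneg)

lemma L_sym_quad_form_le:
  assumes "adjacency_mat n A"
  shows "dot n x (mat_app n (L_sym A) x) \<le> 2 * dot n x x - (\<Sum>i\<in>isolated_vertices n A. (x i)^2)"
  unfolding L_sym_quad_form_expansions(2)[OF assms]
  using assms by (auto simp: adjacency_mat_def intro!: sum_nonneg)

lemma sum_sum_nonneg_eq_0_iff: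
  fixes f :: "'a \<Rightarrow> 'b \<Rightarrow> real"
  assumes "finite I" "finite J" "\<And>i j. i \<in> I \<Longrightarrow> j \<in> J \<Longrightarrow> 0 \<le> f i j"
  shows "(\<Sum>i\<in>I. \<Sum>j\<in>J. f i j) = 0 \<longleftrightarrow> (\<forall>i\<in>I. \<forall>j\<in>J. f i j = 0)"
  using assms by (simp add: sum_nonneg_eq_0_iff sum_nonneg)

lemma L_sym_quad_form_eq_0_iff:
  assumes A: "adjacency_mat n A"
  shows "dot n x (mat_app n (L_sym A) x) = 0 \<longleftrightarrow>
    (\<forall>i\<in>isolated_vertices n A. x i = 0) \<and>
    (\<forall>i<n. \<forall>j<n. A $$ (i,j) \<noteq> 0 \<longrightarrow> inv_sqrt_deg A i * x i = inv_sqrt_deg A j * x j)"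
proof -
  define y where "y i = inv_sqrt_deg A i * x i" for i
  have nn: "\<forall>i<n. \<forall>j<n. A $$ (i,j) \<ge> 0" using A by (auto simp: adjacency_mat_def)
  have fin: "finite (isolated_vertices n A)" by (simp add: isolated_vertices_def)
  have T: "0 \<le> (\<Sum>i<n. \<Sum>j<n. A $$ (i,j) * (y i - y j)^2)" using nn by (auto intro!: sum_nonneg)
  have "dot n x (mat_app n (L_sym A) x) = 0 \<longleftrightarrow>
      (\<Sum>i\<in>isolated_vertices n A. (x i)^2) = 0 \<and> (\<Sum>i<n. \<Sum>j<n. A $$ (i,j) * (y i - y j)^2) = 0"
    unfolding L_sym_quad_form_expansions(1)[OF A] y_def[symmetric]
    using T by (simp add: add_nonneg_eq_0_iff sum_nonneg)
  also have "(\<Sum>i\<in>isolated_vertices n A. (x i)^2) = 0 \<longleftrightarrow> (\<forall>i\<in>isolated_vertices n A. x i = 0)"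
    using fin by (simp add: sum_nonneg_eq_0_iff)
  also have "(\<Sum>i<n. \<Sum>j<n. A $$ (i,j) * (y i - y j)^2) = 0 \<longleftrightarrow>
      (\<forall>i<n. \<forall>j<n. A $$ (i,j) * (y i - y j)^2 = 0)"
    using nn by (subst sum_sum_nonneg_eq_0_iff) auto
  finally show ?thesis by (auto simp: y_def)
qed

lemma L_sym_eigenvalue_nonneg:
  assumes A: "adjacency_mat n A" and E: "orthonormal_eigenbasis n (L_sym A) q lam" and i: "i < n"
  shows "lam i \<ge> 0"
proof -
  have "0 \<le> (\<Sum>k\<in>isolated_vertices n A. (q i k)^2)" by (rule sum_nonneg) simp
  thus ?thesis using L_sym_quad_form_ge[OF A, of "q i"] eigenbasis_quad_form[OF E i] by linarith
qed

lemma L_sym_sorted_eigenbasis: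
  assumes "adjacency_mat n A"
  shows "\<exists>q lam. orthonormal_eigenbasis n (L_sym A) q lam \<and> mono_on {..<n} lam \<and>
     (\<forall>i<n. sorted_eigenvalues (L_sym A) ! i = lam i)"
  using assms symmetric_mat_sorted_eigenbasis[OF L_sym_carrier symmetric_L_sym]
  by (auto simp: adjacency_mat_def)

section \<open>The trace objective under the degree constraint\<close>

lemma index_transpose_mult_mult:
  assumes V: "V \<in> carrier_mat n B" and M: "M \<in> carrier_mat n n" and ij: "i < B" "j < B"
  shows "(V\<^sup>T * M * V) $$ (i,j) = (\<Sum>v<n. \<Sum>w<n. V $$ (v,i) * M $$ (v,w) * V $$ (w,j))"
proof -
  have VT: "V\<^sup>T \<in> carrier_mat B n" using V by simp
  have "(V\<^sup>T * M * V) $$ (i,j) = (\<Sum>w<n. (V\<^sup>T * M) $$ (i,w) * V $$ (w,j))"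
    by (rule index_mult_mat_sum[of _ B n]) (use VT M V ij in auto)
  also have "\<dots> = (\<Sum>w<n. (\<Sum>v<n. V\<^sup>T $$ (i,v) * M $$ (v,w)) * V $$ (w,j))"
    by (rule sum.cong[OF refl]) (subst index_mult_mat_sum[OF VT M ij(1)], auto)
  also have "\<dots> = (\<Sum>w<n. \<Sum>v<n. V $$ (v,i) * M $$ (v,w) * V $$ (w,j))"
    by (rule sum.cong[OF refl]) (use V ij in \<open>auto simp: sum_distrib_right intro!: sum.cong\<close>)
  finally show ?thesis by (subst sum.swap)
qed

lemma diag_deg_carrier: "A \<in> carrier_mat n n \<Longrightarrow> diag_of_vec (deg A) \<in> carrier_mat n n"
  by (simp add: diag_of_vec_def dim_deg)

lemma L_un_carrier: "A \<in> carrier_mat n n \<Longrightarrow> L_un A \<in> carrier_mat n n"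
  unfolding L_un_def by (auto simp: diag_deg_carrier)

lemma index_diag_deg:
  "A \<in> carrier_mat n n \<Longrightarrow> v < n \<Longrightarrow> w < n \<Longrightarrow>
   diag_of_vec (deg A) $$ (v,w) = (if v = w then vertex_deg A v else 0)"
  by (simp add: diag_of_vec_def dim_deg index_deg)

lemma index_L_un:
  "A \<in> carrier_mat n n \<Longrightarrow> v < n \<Longrightarrow> w < n \<Longrightarrow>
   L_un A $$ (v,w) = (if v = w then vertex_deg A v else 0) - A $$ (v,w)"
  by (simp add: L_un_def diag_deg_carrier index_diag_deg)

lemma index_transpose_diag_deg_mult:
  assumes "A \<in> carrier_mat n n" "V \<in> carrier_mat n B" "i < B" "j < B"
  shows "(V\<^sup>T * diag_of_vec (deg A) * V) $$ (i,j) = (\<Sum>v<n. vertex_deg A v * V $$ (v,i) * V $$ (v,j))"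
  unfolding index_transpose_mult_mult[OF assms(2) diag_deg_carrier[OF assms(1)] assms(3,4)]
proof (intro sum.cong refl)
  fix v assume "v \<in> {..<n}"
  hence "(\<Sum>w<n. V $$ (v,i) * diag_of_vec (deg A) $$ (v,w) * V $$ (w,j))
      = (\<Sum>w<n. if w = v then vertex_deg A v * V $$ (v,i) * V $$ (v,j) else 0)"
    using assms(1) by (intro sum.cong refl) (auto simp: index_diag_deg)
  thus "(\<Sum>w<n. V $$ (v,i) * diag_of_vec (deg A) $$ (v,w) * V $$ (w,j))
      = vertex_deg A v * V $$ (v,i) * V $$ (v,j)" using \<open>v \<in> {..<n}\<close> by simp
qed

lemma index_transpose_L_un_mult:
  assumes "A \<in> carrier_mat n n" "V \<in> carrier_mat n B" "j < B"
  shows "(V\<^sup>T * L_un A * V) $$ (j,j) = (\<Sum>v<n. vertex_deg A v * (V $$ (v,j))^2)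
    - (\<Sum>v<n. \<Sum>w<n. A $$ (v,w) * (V $$ (v,j) * V $$ (w,j)))"
proof -
  have "(V\<^sup>T * L_un A * V) $$ (j,j) = (\<Sum>v<n. vertex_deg A v * (V $$ (v,j))^2
      - (\<Sum>w<n. A $$ (v,w) * (V $$ (v,j) * V $$ (w,j))))"
    unfolding index_transpose_mult_mult[OF assms(2) L_un_carrier[OF assms(1)] assms(3,3)]
  proof (intro sum.cong refl)
    fix v assume v: "v \<in> {..<n}"
    have "(\<Sum>w<n. V $$ (v,j) * L_un A $$ (v,w) * V $$ (w,j))
        = (\<Sum>w<n. (if w = v then vertex_deg A v * (V $$ (v,j))^2 else 0)
            - A $$ (v,w) * (V $$ (v,j) * V $$ (w,j)))"
      using assms(1) v by (intro sum.cong refl) (auto simp: index_L_un algebra_simps power2_eq_square)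
    thus "(\<Sum>w<n. V $$ (v,j) * L_un A $$ (v,w) * V $$ (w,j)) = vertex_deg A v * (V $$ (v,j))^2
        - (\<Sum>w<n. A $$ (v,w) * (V $$ (v,j) * V $$ (w,j)))"
      using v by (simp add: sum_subtractf)
  qed
  thus ?thesis by (simp add: sum_subtractf)
qed

definition deg_sqrt_col :: "real mat \<Rightarrow> real mat \<Rightarrow> nat \<Rightarrow> nat \<Rightarrow> real" where
  "deg_sqrt_col A V j v = sqrt (vertex_deg A v) * V $$ (v,j)"

lemma deg_constraint_iff_orthonormal:
  assumes A: "adjacency_mat n A" and V: "V \<in> carrier_mat n B"
  shows "V\<^sup>T * diag_of_vec (deg A) * V = 1\<^sub>m B \<longleftrightarrow> orthonormal n {..<B} (deg_sqrt_col A V)"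
proof -
  have c: "A \<in> carrier_mat n n" using A by (simp add: adjacency_mat_def)
  have entry: "(V\<^sup>T * diag_of_vec (deg A) * V) $$ (i,j)
      = dot n (deg_sqrt_col A V i) (deg_sqrt_col A V j)"
    if "i < B" "j < B" for i j
    unfolding index_transpose_diag_deg_mult[OF c V that] dot_def deg_sqrt_col_def
    by (rule sum.cong) (use vertex_deg_nonneg[OF A] in \<open>auto simp: mult_ac\<close>)
  have "V\<^sup>T * diag_of_vec (deg A) * V \<in> carrier_mat B B" using V c by (auto simp: diag_deg_carrier)
  thus ?thesis unfolding orthonormal_def using entry by (auto simp: mat_eq_iff)
qed

lemma inv_sqrt_deg_mult_deg_sqrt_col:
  "vertex_deg A v > 0 \<Longrightarrow> inv_sqrt_deg A v * deg_sqrt_col A V j v = V $$ (v,j)"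
  by (simp add: deg_sqrt_col_def inv_sqrt_deg_def)

lemma trace_L_un_eq_sum_L_sym_quad_forms:
  assumes A: "adjacency_mat n A" and V: "V \<in> carrier_mat n B"
  shows "mtrace (V\<^sup>T * L_un A * V)
    = (\<Sum>j<B. dot n (deg_sqrt_col A V j) (mat_app n (L_sym A) (deg_sqrt_col A V j)))"
proof -
  have c: "A \<in> carrier_mat n n" using A by (simp add: adjacency_mat_def)
  have "(V\<^sup>T * L_un A * V) $$ (j,j)
      = dot n (deg_sqrt_col A V j) (mat_app n (L_sym A) (deg_sqrt_col A V j))"
    if j: "j < B" for j
  proof -
    define w where "w = deg_sqrt_col A V j"
    have "(\<Sum>v<n. vertex_deg A v * (V $$ (v,j))^2) = dot n w w"
      unfolding dot_def w_def deg_sqrt_col_def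
      by (rule sum.cong) (use vertex_deg_nonneg[OF A] in \<open>auto simp: power2_eq_square mult_ac\<close>)
    moreover have "(\<Sum>v<n. \<Sum>u<n. A $$ (v,u) * (V $$ (v,j) * V $$ (u,j)))
        = (\<Sum>v<n. \<Sum>u<n. A $$ (v,u) * ((inv_sqrt_deg A v * w v) * (inv_sqrt_deg A u * w u)))"
    proof (intro sum.cong refl)
      fix v u assume "v \<in> {..<n}" "u \<in> {..<n}"
      hence vu: "v < n" "u < n" by auto
      show "A $$ (v,u) * (V $$ (v,j) * V $$ (u,j))
          = A $$ (v,u) * ((inv_sqrt_deg A v * w v) * (inv_sqrt_deg A u * w u))"
        using vertex_deg_pos[OF A vu] vertex_deg_pos'[OF A vu]
        by (cases "A $$ (v,u) = 0") (simp_all add: w_def inv_sqrt_deg_mult_deg_sqrt_col)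
    qed
    ultimately show ?thesis
      unfolding index_transpose_L_un_mult[OF c V j] L_sym_quad_form[OF c] w_def[symmetric] by simp
  qed
  thus ?thesis using V by (simp add: mtrace_def)
qed

lemma sum_smallest_L_sym_eigenvalues_le_trace:
  assumes A: "adjacency_mat n A" and V: "V \<in> carrier_mat n B"
    and deg: "V\<^sup>T * diag_of_vec (deg A) * V = 1\<^sub>m B" and B: "B \<le> n"
  shows "(\<Sum>i<B. sorted_eigenvalues (L_sym A) ! i) \<le> mtrace (V\<^sup>T * L_un A * V)"
proof -
  obtain q lam where E: "orthonormal_eigenbasis n (L_sym A) q lam" and "mono_on {..<n} lam"
    and "\<forall>i<n. sorted_eigenvalues (L_sym A) ! i = lam i"
    using L_sym_sorted_eigenbasis[OF A] by blast
  moreover have "orthonormal n {..<B} (deg_sqrt_col A V)"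
    using deg_constraint_iff_orthonormal[OF A V] deg by simp
  ultimately show ?thesis
    using ky_fan_min_principle[OF E symmetric_L_sym[OF A]] B
    by (simp add: trace_L_un_eq_sum_L_sym_quad_forms[OF A V])
qed

section \<open>Zero eigenvalues of \<open>L_sym\<close> and partitions of the vertex set\<close>

text \<open>Isolated vertices are not classified: by the pseudo-inverse convention they carry the
  eigenvalue \<open>1\<close> of \<open>L_sym\<close>, not \<open>0\<close>.\<close>

definition graph_partition :: "nat \<Rightarrow> real mat \<Rightarrow> nat \<Rightarrow> (nat \<Rightarrow> nat) \<Rightarrow> bool" where
  "graph_partition n A k lab \<longleftrightarrow>
     (\<forall>v<n. vertex_deg A v \<noteq> 0 \<longrightarrow> lab v < k) \<and>
     (\<forall>l<k. \<exists>v<n. vertex_deg A v \<noteq> 0 \<and> lab v = l) \<and>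
     (\<forall>v<n. \<forall>w<n. A $$ (v,w) \<noteq> 0 \<longrightarrow> lab v = lab w)"

definition volume :: "real mat \<Rightarrow> nat set \<Rightarrow> real" where
  "volume A c = (\<Sum>v\<in>c. vertex_deg A v)"

definition normalized_indicator :: "real mat \<Rightarrow> nat set \<Rightarrow> nat \<Rightarrow> real" where
  "normalized_indicator A c v = (if v \<in> c then sqrt (vertex_deg A v) / sqrt (volume A c) else 0)"

lemma dot_normalized_indicator_self:
  assumes A: "adjacency_mat n A" and c: "c \<subseteq> {..<n}" "volume A c > 0"
  shows "dot n (normalized_indicator A c) (normalized_indicator A c) = 1"
proof -
  have "dot n (normalized_indicator A c) (normalized_indicator A c)
      = (\<Sum>v<n. if v \<in> c then vertex_deg A v / volume A c else 0)"
    unfolding dot_def normalized_indicator_def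
    by (rule sum.cong) (use vertex_deg_nonneg[OF A] c in \<open>auto simp: real_sqrt_mult[symmetric]\<close>)
  also have "\<dots> = (\<Sum>v\<in>c. vertex_deg A v / volume A c)"
    using c(1) by (simp add: sum.If_cases Int_absorb1)
  also have "\<dots> = 1" using c(2) by (simp add: volume_def flip: sum_divide_distrib)
  finally show ?thesis .
qed

lemma dot_normalized_indicator_disjoint:
  "c \<inter> d = {} \<Longrightarrow> dot n (normalized_indicator A c) (normalized_indicator A d) = 0"
  unfolding dot_def normalized_indicator_def by (auto intro!: sum.neutral)

lemma L_sym_quad_form_normalized_indicator:
  assumes A: "adjacency_mat n A"
    and edges: "\<And>v w. v < n \<Longrightarrow> w < n \<Longrightarrow> A $$ (v,w) \<noteq> 0 \<Longrightarrow> v \<in> c \<longleftrightarrow> w \<in> c"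
  shows "dot n (normalized_indicator A c) (mat_app n (L_sym A) (normalized_indicator A c)) = 0"
  unfolding L_sym_quad_form_eq_0_iff[OF A]
proof (intro conjI ballI allI impI)
  fix v assume "v \<in> isolated_vertices n A"
  thus "normalized_indicator A c v = 0" by (simp add: isolated_vertices_def normalized_indicator_def)
next
  fix v w assume vw: "v < n" "w < n" "A $$ (v,w) \<noteq> 0"
  have "inv_sqrt_deg A u * normalized_indicator A c u = (if u \<in> c then 1 / sqrt (volume A c) else 0)"
    if "vertex_deg A u > 0" for u
    using inv_sqrt_deg_mult_sqrt[OF that] by (simp add: normalized_indicator_def)
  thus "inv_sqrt_deg A v * normalized_indicator A c v = inv_sqrt_deg A w * normalized_indicator A c w"
    using vertex_deg_pos[OF A vw] vertex_deg_pos'[OF A vw] edges[OF vw] by simp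
qed

lemma sum_smallest_L_sym_eigenvalues_eq_0_of_partition:
  assumes A: "adjacency_mat n A" and P: "graph_partition n A k lab" and B: "B \<le> k" "B \<le> n"
  shows "(\<Sum>i<B. sorted_eigenvalues (L_sym A) ! i) = 0"
proof -
  define cls where "cls l = {v. v < n \<and> vertex_deg A v \<noteq> 0 \<and> lab v = l}" for l
  define e where "e l = normalized_indicator A (cls l)" for l
  have vol: "volume A (cls l) > 0" if l: "l < k" for l
  proof -
    obtain v where v: "v < n" "vertex_deg A v \<noteq> 0" "lab v = l"
      using P l unfolding graph_partition_def by blast
    have "vertex_deg A v \<le> volume A (cls l)"
      unfolding volume_def using v vertex_deg_nonneg[OF A]
      by (intro member_le_sum) (auto simp: cls_def)
    thus ?thesis using v vertex_deg_nonneg[OF A v(1)] by linarith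
  qed
  have "orthonormal n {..<B} e"
    unfolding orthonormal_def
  proof (intro ballI)
    fix l m assume "l \<in> {..<B}" "m \<in> {..<B}"
    hence "l < k" "m < k" using B by auto
    moreover have "cls l \<subseteq> {..<n}" "cls l \<inter> cls m = {} \<or> l = m" by (auto simp: cls_def)
    ultimately show "dot n (e l) (e m) = (if l = m then 1 else 0)"
      unfolding e_def using dot_normalized_indicator_self[OF A _ vol] dot_normalized_indicator_disjoint
      by auto
  qed
  moreover have "dot n (e l) (mat_app n (L_sym A) (e l)) = 0" for l
    unfolding e_def
  proof (rule L_sym_quad_form_normalized_indicator[OF A])
    fix v w assume vw: "v < n" "w < n" "A $$ (v,w) \<noteq> 0"
    hence "lab v = lab w" using P by (simp add: graph_partition_def)
    thus "v \<in> cls l \<longleftrightarrow> w \<in> cls l"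
      using vw vertex_deg_pos[OF A vw] vertex_deg_pos'[OF A vw] by (simp add: cls_def)
  qed
  moreover obtain q lam where E: "orthonormal_eigenbasis n (L_sym A) q lam" "mono_on {..<n} lam"
    and lam: "\<forall>i<n. sorted_eigenvalues (L_sym A) ! i = lam i"
    using L_sym_sorted_eigenbasis[OF A] by blast
  ultimately have "(\<Sum>i<B. lam i) \<le> 0"
    using ky_fan_min_principle[OF E(1) symmetric_L_sym[OF A] E(2), of B e] B by simp
  moreover have "(\<Sum>i<B. lam i) \<ge> 0"
    using L_sym_eigenvalue_nonneg[OF A E(1)] B by (auto intro: sum_nonneg)
  ultimately show ?thesis using lam B by simp
qed

lemma graph_partition_of_class_map:
  assumes edges: "\<And>v w. v < n \<Longrightarrow> w < n \<Longrightarrow> A $$ (v,w) \<noteq> 0 \<Longrightarrow> cls v = cls w"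
  shows "\<exists>lab. graph_partition n A (card (cls ` {v. v < n \<and> vertex_deg A v \<noteq> 0})) lab"
proof -
  define K where "K = cls ` {v. v < n \<and> vertex_deg A v \<noteq> 0}"
  obtain h where h: "bij_betw h {..<card K} K"
    using ex_bij_betw_nat_finite[of K] by (auto simp: K_def atLeast0LessThan)
  define lab where "lab v = the_inv_into {..<card K} h (cls v)" for v
  have lab: "lab v < card K" "h (lab v) = cls v" if "cls v \<in> K" for v
    using that h the_inv_into_into[of h "{..<card K}" "cls v"] f_the_inv_into_f[of h "{..<card K}"]
    by (auto simp: lab_def bij_betw_def)
  have "graph_partition n A (card K) lab"
    unfolding graph_partition_def
  proof (intro conjI allI impI)
    fix v assume "v < n" "vertex_deg A v \<noteq> 0"
    thus "lab v < card K" using lab(1) by (simp add: K_def)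
  next
    fix l assume l: "l < card K"
    hence "h l \<in> K" using bij_betwE[OF h] by blast
    then obtain v where "v \<in> {v. v < n \<and> vertex_deg A v \<noteq> 0}" "h l = cls v"
      unfolding K_def by (rule imageE)
    hence v: "v < n" "vertex_deg A v \<noteq> 0" "cls v = h l" by simp_all
    have "lab v = l"
      using l v(3) h the_inv_into_f_f[of h "{..<card K}" l] by (simp add: lab_def bij_betw_def)
    thus "\<exists>v<n. vertex_deg A v \<noteq> 0 \<and> lab v = l" using v by blast
  next
    fix v w assume "v < n" "w < n" "A $$ (v,w) \<noteq> 0"
    thus "lab v = lab w" by (simp add: lab_def edges)
  qed
  thus ?thesis unfolding K_def by blast
qed

lemma dot_normalized_indicator_sq:
  assumes A: "adjacency_mat n A" and c: "c \<subseteq> {..<n}" "\<And>v. v \<in> c \<Longrightarrow> vertex_deg A v > 0"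
    and const: "\<And>v. v \<in> c \<Longrightarrow> inv_sqrt_deg A v * x v = Y"
  shows "(dot n x (normalized_indicator A c))^2 = (\<Sum>v\<in>c. (x v)^2)"
proof -
  have fin: "finite c" using c(1) finite_subset by blast
  have x: "x v = Y * sqrt (vertex_deg A v)" if "v \<in> c" for v
    using const[OF that] inv_sqrt_deg_mult_sqrt[OF c(2)[OF that]]
      by (metis mult.assoc mult.commute mult_1)
  have "dot n x (normalized_indicator A c) = (\<Sum>v\<in>c. x v * sqrt (vertex_deg A v) / sqrt (volume A c))"
    unfolding dot_def normalized_indicator_def using c(1)
    by (simp add: if_distrib sum.If_cases Int_absorb1 cong: if_cong)
  also have "\<dots> = (\<Sum>v\<in>c. Y * vertex_deg A v / sqrt (volume A c))"
    using c(2) x by (intro sum.cong refl) (simp add: mult.assoc less_imp_le)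
  also have "\<dots> = Y * volume A c / sqrt (volume A c)"
    by (simp add: volume_def sum_distrib_left flip: sum_divide_distrib)
  moreover have "volume A c \<ge> 0" unfolding volume_def using c(2) by (simp add: sum_nonneg less_imp_le)
  ultimately have "(dot n x (normalized_indicator A c))^2 = Y^2 * volume A c"
    by (cases "volume A c = 0") (simp_all add: power_divide power_mult_distrib power2_eq_square)
  also have "\<dots> = (\<Sum>v\<in>c. (x v)^2)"
    using c(2) x by (simp add: volume_def sum_distrib_left power_mult_distrib less_imp_le)
  finally show ?thesis .
qed

text \<open>Each \<open>q t\<close> lies in the span of the normalized indicators of the classes \<open>cls v\<close>,
  and these indicators are orthonormal.\<close>

lemma card_signature_classes_ge:
  assumes A: "adjacency_mat n A" and O: "orthonormal n {..<B} q"
    and iso: "\<And>t v. t < B \<Longrightarrow> v \<in> isolated_vertices n A \<Longrightarrow> q t v = 0"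
  defines "V \<equiv> {v. v < n \<and> vertex_deg A v \<noteq> 0}"
  defines "cls \<equiv> \<lambda>v. {w \<in> V. \<forall>t<B. inv_sqrt_deg A w * q t w = inv_sqrt_deg A v * q t v}"
  shows "B \<le> card (cls ` V)"
proof -
  have pos: "vertex_deg A v > 0" if "v \<in> V" for v
    using that vertex_deg_nonneg[OF A] by (force simp: V_def)
  have self: "v \<in> cls v" if "v \<in> V" for v using that by (simp add: cls_def)
  have sub: "cls v \<subseteq> {..<n}" for v by (auto simp: cls_def V_def)
  have same: "cls w = cls v" if "w \<in> cls v" for v w using that by (auto simp: cls_def)
  have vol: "volume A c > 0" if c: "c \<in> cls ` V" for c
  proof -
    obtain v where v: "v \<in> V" "c = cls v" using c by blast
    have "vertex_deg A v \<le> volume A c"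
      unfolding volume_def using v self sub vertex_deg_nonneg[OF A]
      by (intro member_le_sum) (auto intro: finite_subset)
    thus ?thesis using pos[OF v(1)] by simp
  qed
  have disj: "c \<inter> d = {}" if "c \<in> cls ` V" "d \<in> cls ` V" "c \<noteq> d" for c d
    using that same by blast
  have "orthonormal n (cls ` V) (normalized_indicator A)"
    unfolding orthonormal_def
    using dot_normalized_indicator_self[OF A _ vol] dot_normalized_indicator_disjoint disj sub
    by auto
  moreover have "dot n (q j) (q j) = (\<Sum>c\<in>cls ` V. (dot n (q j) (normalized_indicator A c))^2)"
    if j: "j < B" for j
  proof -
    have "(\<Sum>c\<in>cls ` V. (dot n (q j) (normalized_indicator A c))^2) = (\<Sum>c\<in>cls ` V. \<Sum>v\<in>c. (q j v)^2)"
    proof (intro sum.cong refl)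
      fix c assume "c \<in> cls ` V"
      then obtain v where "v \<in> V" "c = cls v" by blast
      thus "(dot n (q j) (normalized_indicator A c))^2 = (\<Sum>v\<in>c. (q j v)^2)"
        using dot_normalized_indicator_sq[OF A sub[of v], of "q j" "inv_sqrt_deg A v * q j v"] j pos
        by (auto simp: cls_def)
    qed
    also have "\<dots> = (\<Sum>v\<in>\<Union>(cls ` V). (q j v)^2)"
      using sum.Union_disjoint[of "cls ` V" "\<lambda>v. (q j v)^2"] sub disj
      by (metis (no_types, lifting) comp_apply finite_lessThan finite_subset imageE)
    also have "\<Union>(cls ` V) = V" using self by (auto simp: cls_def)
    also have "(\<Sum>v\<in>V. (q j v)^2) = dot n (q j) (q j)"
      unfolding dot_def power2_eq_square using iso[OF j]
      by (intro sum.mono_neutral_left) (auto simp: V_def isolated_vertices_def)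
    finally show ?thesis by simp
  qed
  ultimately show ?thesis
    using orthonormal_card_le[OF O _ _ _, of "cls ` V" "normalized_indicator A"] by (simp add: V_def)
qed

lemma partition_of_sum_smallest_L_sym_eigenvalues_eq_0:
  assumes A: "adjacency_mat n A" and B: "B \<le> n"
    and zero: "(\<Sum>i<B. sorted_eigenvalues (L_sym A) ! i) = 0"
  shows "\<exists>k lab. B \<le> k \<and> graph_partition n A k lab"
proof -
  obtain q lam where E: "orthonormal_eigenbasis n (L_sym A) q lam"
    and lam: "\<forall>i<n. sorted_eigenvalues (L_sym A) ! i = lam i"
    using L_sym_sorted_eigenbasis[OF A] by blast
  have "(\<Sum>i<B. lam i) = 0" using zero lam B by simp
  hence "lam t = 0" if "t < B" for t
    using that B L_sym_eigenvalue_nonneg[OF A E] sum_nonneg_eq_0_iff[of "{..<B}" lam] by auto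
  hence quad: "dot n (q t) (mat_app n (L_sym A) (q t)) = 0" if "t < B" for t
    using eigenbasis_quad_form[OF E] that B by simp
  define V where "V = {v. v < n \<and> vertex_deg A v \<noteq> 0}"
  define cls where "cls v = {w \<in> V. \<forall>t<B. inv_sqrt_deg A w * q t w = inv_sqrt_deg A v * q t v}" for v
  have "B \<le> card (cls ` V)"
    unfolding cls_def V_def
    by (rule card_signature_classes_ge[OF A eigenbasis_orthonormal[OF E]])
       (use quad B L_sym_quad_form_eq_0_iff[OF A] in auto)
  moreover have "cls v = cls w" if "v < n" "w < n" "A $$ (v,w) \<noteq> 0" for v w
    using quad L_sym_quad_form_eq_0_iff[OF A] that by (simp add: cls_def)
  ultimately show ?thesis
    using graph_partition_of_class_map[of n A cls] unfolding V_def by blast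
qed

lemma sum_lessThan_add: "(\<Sum>j<R + C. f j) = (\<Sum>j<R. f j) + (\<Sum>j<C. f (R + j))"
  for f :: "nat \<Rightarrow> 'a::comm_monoid_add"
  by (induction C) (auto simp: add.assoc)

lemma A_bp_carrier: "X \<in> carrier_mat R C \<Longrightarrow> A_bp X \<in> carrier_mat (R + C) (R + C)"
  by (simp add: A_bp_def)

lemma index_A_bp:
  "X \<in> carrier_mat R C \<Longrightarrow> i < R + C \<Longrightarrow> j < R + C \<Longrightarrow> A_bp X $$ (i,j) =
    (if i < R \<and> R \<le> j then X $$ (i, j - R) else if R \<le> i \<and> j < R then X $$ (j, i - R) else 0)"
  by (simp add: A_bp_def)

lemma adjacency_mat_A_bp:
  assumes "X \<in> carrier_mat R C" and "nonneg_mat X"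
  shows "adjacency_mat (R + C) (A_bp X)"
  using assms
    by (auto simp: adjacency_mat_def symmetric_mat_def A_bp_carrier index_A_bp nonneg_mat_def)

lemma A_bp_edge:
  assumes "X \<in> carrier_mat R C" "i < R + C" "j < R + C" "A_bp X $$ (i,j) \<noteq> 0"
  shows "(i < R \<and> R \<le> j \<and> X $$ (i, j - R) \<noteq> 0) \<or> (R \<le> i \<and> j < R \<and> X $$ (j, i - R) \<noteq> 0)"
  using assms by (auto simp: index_A_bp split: if_splits)

lemma vertex_deg_A_bp_row:
  assumes X: "X \<in> carrier_mat R C" and i: "i < R"
  shows "vertex_deg (A_bp X) i = (\<Sum>j<C. X $$ (i,j))"
proof -
  have "vertex_deg (A_bp X) i = (\<Sum>j<R. A_bp X $$ (i,j)) + (\<Sum>j<C. A_bp X $$ (i, R + j))"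
    using X by (simp add: vertex_deg_def A_bp_carrier[OF X, THEN carrier_matD(2)] sum_lessThan_add)
  thus ?thesis using X i by (simp add: index_A_bp)
qed

lemma vertex_deg_A_bp_col:
  assumes X: "X \<in> carrier_mat R C" and j: "j < C"
  shows "vertex_deg (A_bp X) (R + j) = (\<Sum>i<R. X $$ (i,j))"
proof -
  have "vertex_deg (A_bp X) (R + j) = (\<Sum>i<R. A_bp X $$ (R + j, i)) + (\<Sum>i<C. A_bp X $$ (R + j, R + i))"
    using X by (simp add: vertex_deg_def A_bp_carrier[OF X, THEN carrier_matD(2)] sum_lessThan_add)
  thus ?thesis using X j by (simp add: index_A_bp)
qed

section \<open>Block diagonal structure\<close>

definition block_labeling :: "real mat \<Rightarrow> nat \<Rightarrow> (nat \<Rightarrow> nat) \<Rightarrow> (nat \<Rightarrow> nat) \<Rightarrow> bool" where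
  "block_labeling X k lr lc \<longleftrightarrow>
     (\<forall>i<dim_row X. lr i < k) \<and> (\<forall>j<dim_col X. lc j < k) \<and>
     (\<forall>i<dim_row X. \<forall>j<dim_col X. X $$ (i,j) \<noteq> 0 \<longrightarrow> lr i = lc j) \<and>
     (\<forall>l<k. \<exists>i<dim_row X. \<exists>j<dim_col X. lr i = l \<and> lc j = l \<and> X $$ (i,j) \<noteq> 0)"

lemma graph_partition_of_block_labeling:
  assumes X: "X \<in> carrier_mat R C" "nonneg_mat X" and L: "block_labeling X k lr lc"
  shows "graph_partition (R + C) (A_bp X) k (\<lambda>v. if v < R then lr v else lc (v - R))"
  unfolding graph_partition_def
proof (intro conjI allI impI)
  fix v assume "v < R + C"
  thus "(if v < R then lr v else lc (v - R)) < k" using L X by (auto simp: block_labeling_def)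
next
  fix l assume "l < k"
  hence "\<exists>i<dim_row X. \<exists>j<dim_col X. lr i = l \<and> lc j = l \<and> X $$ (i,j) \<noteq> 0"
    using L by (simp add: block_labeling_def)
  then obtain i j where ij: "i < R" "j < C" "lr i = l" "lc j = l" "X $$ (i,j) \<noteq> 0"
    using X(1) by blast
  have "A_bp X $$ (i, R + j) \<noteq> 0" using X ij by (simp add: index_A_bp)
  hence "vertex_deg (A_bp X) i \<noteq> 0"
    using vertex_deg_pos[OF adjacency_mat_A_bp[OF X], of i "R + j"] ij by simp
  thus "\<exists>v<R + C. vertex_deg (A_bp X) v \<noteq> 0 \<and> (if v < R then lr v else lc (v - R)) = l"
    using ij by (intro exI[of _ i]) auto
next
  fix v w assume vw: "v < R + C" "w < R + C" "A_bp X $$ (v,w) \<noteq> 0"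
  have L3: "lr i = lc j" if "i < R" "j < C" "X $$ (i,j) \<noteq> 0" for i j
    using L X that by (simp add: block_labeling_def)
  show "(if v < R then lr v else lc (v - R)) = (if w < R then lr w else lc (w - R))"
    using A_bp_edge[OF X(1) vw] L3[of v "w - R"] L3[of w "v - R"] vw by auto
qed

lemma block_labeling_of_graph_partition:
  assumes X: "X \<in> carrier_mat R C" "nonneg_mat X" and P: "graph_partition (R + C) (A_bp X) k lab"
    and k: "0 < k"
  defines "lab' \<equiv> \<lambda>v. if vertex_deg (A_bp X) v \<noteq> 0 then lab v else 0"
  shows "block_labeling X k lab' (\<lambda>j. lab' (R + j))"
  unfolding block_labeling_def
proof (intro conjI allI impI)
  have A: "adjacency_mat (R + C) (A_bp X)" by (rule adjacency_mat_A_bp[OF X])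
  have edge: "lab' v = lab' w" if "v < R + C" "w < R + C" "A_bp X $$ (v,w) \<noteq> 0" for v w
    using P that vertex_deg_pos[OF A that] vertex_deg_pos'[OF A that]
    by (simp add: lab'_def graph_partition_def)
  show "lab' i < k" if "i < dim_row X" for i
    using P that k X by (simp add: lab'_def graph_partition_def)
  show "lab' (R + j) < k" if "j < dim_col X" for j
    using P that k X by (simp add: lab'_def graph_partition_def)
  show "lab' i = lab' (R + j)" if "i < dim_row X" "j < dim_col X" "X $$ (i,j) \<noteq> 0" for i j
    using edge[of i "R + j"] that X by (simp add: index_A_bp)
  fix l assume l: "l < k"
  then obtain v where v: "v < R + C" "vertex_deg (A_bp X) v \<noteq> 0" "lab v = l"
    using P by (auto simp: graph_partition_def)
  have "vertex_deg (A_bp X) v = (\<Sum>w<R + C. A_bp X $$ (v,w))"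
    using A_bp_carrier[OF X(1)] by (simp add: vertex_deg_def)
  hence "\<not> (\<forall>w<R + C. A_bp X $$ (v,w) = 0)" using v(2) by (metis lessThan_iff sum.neutral)
  then obtain w where w: "w < R + C" "A_bp X $$ (v,w) \<noteq> 0" by blast
  have lv: "lab' v = l" and lw: "lab' w = l" using v edge[OF v(1) w] by (auto simp: lab'_def)
  from A_bp_edge[OF X(1) v(1) w]
  show "\<exists>i<dim_row X. \<exists>j<dim_col X. lab' i = l \<and> lab' (R + j) = l \<and> X $$ (i,j) \<noteq> 0"
  proof
    assume c: "v < R \<and> R \<le> w \<and> X $$ (v, w - R) \<noteq> 0"
    hence "w - R < C" using w(1) by linarith
    thus ?thesis using c lv lw X by (intro exI[of _ v] exI[of _ "w - R"]) auto
  next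
    assume c: "R \<le> v \<and> w < R \<and> X $$ (w, v - R) \<noteq> 0"
    hence "v - R < C" using v(1) by linarith
    thus ?thesis using c lv lw X by (intro exI[of _ w] exI[of _ "v - R"]) auto
  qed
qed

lemma ex_block_labeling_iff_graph_partition:
  assumes "X \<in> carrier_mat R C" "nonneg_mat X" "0 < B"
  shows "(\<exists>k lr lc. B \<le> k \<and> block_labeling X k lr lc) \<longleftrightarrow>
    (\<exists>k lab. B \<le> k \<and> graph_partition (R + C) (A_bp X) k lab)"
  using graph_partition_of_block_labeling[OF assms(1,2)]
    block_labeling_of_graph_partition[OF assms(1,2)]
    assms(3) by (meson order_less_le_trans)

lemma ex1_interval_index:
  fixes a :: "nat \<Rightarrow> nat"
  assumes a0: "a 0 = 0" and inc: "\<forall>l<k. a l < a (Suc l)" and p: "p < a k"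
  shows "\<exists>!l. l < k \<and> a l \<le> p \<and> p < a (Suc l)"
proof -
  have mono: "a l \<le> a l'" if "l \<le> l'" "l' \<le> k" for l l'
    using lift_Suc_mono_le_ivl[of "{..<k}" a l l'] inc that by force
  have k0: "k \<noteq> 0" using a0 p by (cases k) auto
  define l where "l = (LEAST l. p < a (Suc l))"
  have ex: "p < a (Suc (k - 1))" using k0 p by simp
  have l1: "p < a (Suc l)" unfolding l_def by (rule LeastI[of "\<lambda>l. p < a (Suc l)", OF ex])
  have l2: "l \<le> k - 1" unfolding l_def by (rule Least_le[of "\<lambda>l. p < a (Suc l)", OF ex])
  have l3: "a l \<le> p"
  proof (cases l)
    case (Suc m)
    have "m < l" using Suc by simp
    hence "\<not> p < a (Suc m)" unfolding l_def by (rule not_less_Least)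
    thus ?thesis using Suc by simp
  qed (simp add: a0)
  have "l' = l" if l': "l' < k" "a l' \<le> p" "p < a (Suc l')" for l'
  proof (cases l' l rule: linorder_cases)
    case less
    hence "a (Suc l') \<le> a l" using mono l2 k0 by simp
    thus ?thesis using l' l3 by simp
  next
    case greater
    hence "a (Suc l) \<le> a l'" using mono l' by simp
    thus ?thesis using l' l1 by simp
  qed simp
  thus ?thesis using l1 l2 l3 k0 by (intro ex1I[of _ l]) auto
qed

lemma block_labeling_of_block_diag_perm:
  assumes X: "X \<in> carrier_mat R C" and bd: "block_diag_perm B X"
  shows "\<exists>k lr lc. B \<le> k \<and> block_labeling X k lr lc"
proof -
  from bd X obtain \<sigma> \<tau> k a b where
    sig: "\<sigma> permutes {..<R}" and tau: "\<tau> permutes {..<C}" and Bk: "B \<le> k" and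
    a: "a 0 = 0" "a k = R" and b: "b 0 = 0" "b k = C" and
    inc: "\<forall>l<k. a l < a (Suc l)" "\<forall>l<k. b l < b (Suc l)" and
    blk: "\<forall>i<R. \<forall>j<C. X $$ (\<sigma> i, \<tau> j) \<noteq> 0 \<longrightarrow>
      (\<exists>l<k. a l \<le> i \<and> i < a (Suc l) \<and> b l \<le> j \<and> j < b (Suc l))" and
    wit: "\<forall>l<k. \<exists>i j. a l \<le> i \<and> i < a (Suc l) \<and> b l \<le> j \<and> j < b (Suc l) \<and> X $$ (\<sigma> i, \<tau> j) \<noteq> 0"
    unfolding block_diag_perm_def by auto
  define \<sigma>' where "\<sigma>' = inv_into UNIV \<sigma>"
  define \<tau>' where "\<tau>' = inv_into UNIV \<tau>"
  define lr where "lr i = (THE l. l < k \<and> a l \<le> \<sigma>' i \<and> \<sigma>' i < a (Suc l))" for i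
  define lc where "lc j = (THE l. l < k \<and> b l \<le> \<tau>' j \<and> \<tau>' j < b (Suc l))" for j
  have \<sigma>': "\<sigma>' permutes {..<R}" and \<tau>': "\<tau>' permutes {..<C}"
    unfolding \<sigma>'_def \<tau>'_def using permutes_inv[OF sig] permutes_inv[OF tau] by (simp_all add: inv_def)
  have lr: "lr i = l \<longleftrightarrow> l < k \<and> a l \<le> \<sigma>' i \<and> \<sigma>' i < a (Suc l)" if "i < R" for i l
  proof -
    have ex1: "\<exists>!l. l < k \<and> a l \<le> \<sigma>' i \<and> \<sigma>' i < a (Suc l)" (is "\<exists>!l. ?P l")
      using ex1_interval_index[OF a(1) inc(1)] permutes_in_image[OF \<sigma>'] that a(2) by simp
    have "?P (THE l. ?P l)" by (rule theI'[OF ex1])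
    moreover have "?P l \<Longrightarrow> (THE l. ?P l) = l" by (rule the1_equality[OF ex1])
    ultimately show ?thesis unfolding lr_def by blast
  qed
  have lc: "lc j = l \<longleftrightarrow> l < k \<and> b l \<le> \<tau>' j \<and> \<tau>' j < b (Suc l)" if "j < C" for j l
  proof -
    have ex1: "\<exists>!l. l < k \<and> b l \<le> \<tau>' j \<and> \<tau>' j < b (Suc l)" (is "\<exists>!l. ?P l")
      using ex1_interval_index[OF b(1) inc(2)] permutes_in_image[OF \<tau>'] that b(2) by simp
    have "?P (THE l. ?P l)" by (rule theI'[OF ex1])
    moreover have "?P l \<Longrightarrow> (THE l. ?P l) = l" by (rule the1_equality[OF ex1])
    ultimately show ?thesis unfolding lc_def by blast
  qed
  have "block_labeling X k lr lc"
    unfolding block_labeling_def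
  proof (intro conjI allI impI)
    show "lr i < k" if "i < dim_row X" for i using lr[of i "lr i"] that X by simp
    show "lc j < k" if "j < dim_col X" for j using lc[of j "lc j"] that X by simp
  next
    fix i j assume ij: "i < dim_row X" "j < dim_col X" "X $$ (i,j) \<noteq> 0"
    have "X $$ (\<sigma> (\<sigma>' i), \<tau> (\<tau>' j)) \<noteq> 0"
      using ij permutes_inverses(1)[OF sig] permutes_inverses(1)[OF tau] by (simp add: \<sigma>'_def \<tau>'_def)
    moreover have "\<sigma>' i < R" "\<tau>' j < C"
      using permutes_in_image[OF \<sigma>'] permutes_in_image[OF \<tau>'] ij X by auto
    ultimately obtain l where "l < k" "a l \<le> \<sigma>' i" "\<sigma>' i < a (Suc l)" "b l \<le> \<tau>' j" "\<tau>' j < b (Suc l)"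
      using blk by blast
    thus "lr i = lc j" using lr[of i l] lc[of j l] ij X by simp
  next
    fix l assume l: "l < k"
    then obtain i j where w: "a l \<le> i" "i < a (Suc l)" "b l \<le> j" "j < b (Suc l)" "X $$ (\<sigma> i, \<tau> j) \<noteq> 0"
      using wit by blast
    have "a (Suc l) \<le> R" "b (Suc l) \<le> C"
      using lift_Suc_mono_le_ivl[of "{..<k}" a "Suc l" k] lift_Suc_mono_le_ivl[of "{..<k}" b "Suc l" k]
        inc l a(2) b(2) by force+
    hence ij: "i < R" "j < C" using w by linarith+
    have "lr (\<sigma> i) = l" "lc (\<tau> j) = l"
      using lr[of "\<sigma> i" l] lc[of "\<tau> j" l] permutes_in_image[OF sig] permutes_in_image[OF tau]
        permutes_inverses(2)[OF sig] permutes_inverses(2)[OF tau] ij w l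
      by (simp_all add: \<sigma>'_def \<tau>'_def)
    moreover have "\<sigma> i < dim_row X" "\<tau> j < dim_col X"
      using permutes_in_image[OF sig] permutes_in_image[OF tau] ij X by auto
    ultimately show "\<exists>i<dim_row X. \<exists>j<dim_col X. lr i = l \<and> lc j = l \<and> X $$ (i,j) \<noteq> 0"
      using w(5) by blast
  qed
  thus ?thesis using Bk by blast
qed

lemma sorted_nth_less_iff_length_filter:
  fixes ks :: "nat list"
  assumes "sorted ks" "p < length ks"
  shows "ks ! p < l \<longleftrightarrow> p < length (filter (\<lambda>x. x < l) ks)"
  using assms
proof (induction ks arbitrary: p)
  case (Cons x xs)
  show ?case
  proof (cases "x < l")
    case True
    thus ?thesis using Cons by (cases p) auto
  next
    case False
    hence "filter (\<lambda>y. y < l) xs = []" using Cons.prems(1) by (auto simp: filter_empty_conv)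
    moreover have "\<not> (x # xs) ! p < l"
    proof (cases p)
      case (Suc p')
      hence "xs ! p' \<in> set xs" using Cons.prems(2) by simp
      thus ?thesis using Cons.prems(1) False Suc by fastforce
    qed (use False in simp)
    ultimately show ?thesis using False by simp
  qed
qed simp

text \<open>\<open>\<sigma>\<close> lists the indices in order of increasing label, so that label \<open>l\<close> occupies the
  positions \<open>c l \<le> p < c (Suc l)\<close>.\<close>

lemma sort_by_label:
  fixes lab :: "nat \<Rightarrow> nat" and R :: nat
  defines "rs \<equiv> sort_key lab [0..<R]"
  defines "\<sigma> \<equiv> \<lambda>i. if i < R then rs ! i else i"
  defines "c \<equiv> \<lambda>l. length (filter (\<lambda>x. x < l) (map lab rs))"
  shows "\<sigma> permutes {..<R}"
    and "\<And>p l. p < R \<Longrightarrow> lab (\<sigma> p) < l \<longleftrightarrow> p < c l"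
    and "\<And>i. i < R \<Longrightarrow> \<exists>p<R. \<sigma> p = i"
    and "(\<forall>i<R. lab i < k) \<Longrightarrow> c k = R"
proof -
  have len: "length rs = R" and set: "set rs = {..<R}" and dist: "distinct rs"
    by (auto simp: rs_def)
  have "bij_betw ((!) rs) {..<R} {..<R}" by (rule bij_betw_nth[OF dist]) (use len set in auto)
  hence "bij_betw \<sigma> {..<R} {..<R}" by (rule bij_betw_cong[THEN iffD1, rotated]) (simp add: \<sigma>_def)
  thus "\<sigma> permutes {..<R}" by (rule bij_imp_permutes) (simp add: \<sigma>_def)
  show "lab (\<sigma> p) < l \<longleftrightarrow> p < c l" if "p < R" for p l
    using sorted_nth_less_iff_length_filter[of "map lab rs" p l] that len
    by (simp add: rs_def sorted_sort_key c_def \<sigma>_def)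
  show "\<exists>p<R. \<sigma> p = i" if "i < R" for i
    using that len set by (metis \<sigma>_def in_set_conv_nth lessThan_iff)
  show "c k = R" if "\<forall>i<R. lab i < k"
  proof -
    have "filter (\<lambda>x. x < k) (map lab rs) = map lab rs" using that set by (auto simp: filter_id_conv)
    thus ?thesis using len unfolding c_def by (metis length_map)
  qed
qed

lemma block_diag_perm_of_block_labeling:
  assumes X: "X \<in> carrier_mat R C" and L: "block_labeling X k lr lc" and Bk: "B \<le> k"
  shows "block_diag_perm B X"
proof -
  define \<sigma> where "\<sigma> i = (if i < R then sort_key lr [0..<R] ! i else i)" for i
  define \<tau> where "\<tau> j = (if j < C then sort_key lc [0..<C] ! j else j)" for j
  define a where "a l = length (filter (\<lambda>x. x < l) (map lr (sort_key lr [0..<R])))" for l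
  define b where "b l = length (filter (\<lambda>x. x < l) (map lc (sort_key lc [0..<C])))" for l
  note S = sort_by_label[where lab = lr and R = R, folded \<sigma>_def a_def]
  note T = sort_by_label[where lab = lc and R = C, folded \<tau>_def b_def]
  have L1: "\<forall>i<R. lr i < k" and L2: "\<forall>j<C. lc j < k"
    and L3: "\<And>i j. i < R \<Longrightarrow> j < C \<Longrightarrow> X $$ (i,j) \<noteq> 0 \<Longrightarrow> lr i = lc j"
    and L4: "\<forall>l<k. \<exists>i<R. \<exists>j<C. lr i = l \<and> lc j = l \<and> X $$ (i,j) \<noteq> 0"
    using L X unfolding block_labeling_def by auto
  have inp: "a l \<le> p \<and> p < a (Suc l) \<longleftrightarrow> lr (\<sigma> p) = l" if "p < R" for p l
    using S(2)[OF that, of l] S(2)[OF that, of "Suc l"] by auto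
  have inq: "b l \<le> q \<and> q < b (Suc l) \<longleftrightarrow> lc (\<tau> q) = l" if "q < C" for q l
    using T(2)[OF that, of l] T(2)[OF that, of "Suc l"] by auto
  have W: "\<exists>p q. a l \<le> p \<and> p < a (Suc l) \<and> b l \<le> q \<and> q < b (Suc l) \<and> X $$ (\<sigma> p, \<tau> q) \<noteq> 0"
    if l: "l < k" for l
  proof -
    obtain i j where ij: "i < R" "j < C" "lr i = l" "lc j = l" "X $$ (i,j) \<noteq> 0" using L4 l by blast
    obtain p q where "p < R" "\<sigma> p = i" "q < C" "\<tau> q = j" using S(3)[OF ij(1)] T(3)[OF ij(2)] by blast
    thus ?thesis using inp inq ij by blast
  qed
  have inc: "\<forall>l<k. a l < a (Suc l) \<and> b l < b (Suc l)"
    using W by (meson le_less_trans)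
  have blk: "\<forall>p<R. \<forall>q<C. X $$ (\<sigma> p, \<tau> q) \<noteq> 0 \<longrightarrow>
      (\<exists>l<k. a l \<le> p \<and> p < a (Suc l) \<and> b l \<le> q \<and> q < b (Suc l))"
  proof (intro allI impI)
    fix p q assume pq: "p < R" "q < C" "X $$ (\<sigma> p, \<tau> q) \<noteq> 0"
    hence "\<sigma> p < R" "\<tau> q < C" using permutes_in_image[OF S(1)] permutes_in_image[OF T(1)] by auto
    hence "lr (\<sigma> p) = lc (\<tau> q)" "lr (\<sigma> p) < k" using L1 L3 pq(3) by auto
    thus "\<exists>l<k. a l \<le> p \<and> p < a (Suc l) \<and> b l \<le> q \<and> q < b (Suc l)"
      using inp[OF pq(1)] inq[OF pq(2)] by metis
  qed
  have ends: "a 0 = 0" "b 0 = 0" "a k = R" "b k = C" using S(4) T(4) L1 L2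
    by (simp_all add: a_def b_def)
  have dims: "dim_row X = R" "dim_col X = C" using X by auto
  show ?thesis
    unfolding block_diag_perm_def dims using S(1) T(1) Bk ends inc blk W by blast
qed

lemma block_diag_perm_iff_block_labeling:
  "X \<in> carrier_mat R C \<Longrightarrow> block_diag_perm B X \<longleftrightarrow> (\<exists>k lr lc. B \<le> k \<and> block_labeling X k lr lc)"
  using block_labeling_of_block_diag_perm block_diag_perm_of_block_labeling by blast

section \<open>Attaining the Ky Fan bound under the degree constraint\<close>

text \<open>Adding \<open>2\<close> on the isolated vertices moves their eigenvalue \<open>1\<close> to \<open>3\<close>, above the rest of
  the spectrum, and does not change \<open>L_sym A\<close> on vectors vanishing on isolated vertices.\<close>

definition L_sym_shift :: "nat \<Rightarrow> real mat \<Rightarrow> real mat" where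
  "L_sym_shift n A =
     mat n n (\<lambda>(i,j). L_sym A $$ (i,j) + (if i = j \<and> vertex_deg A i = 0 then 2 else 0))"

definition unit_fun :: "nat \<Rightarrow> nat \<Rightarrow> real" where
  "unit_fun i = (\<lambda>v. if v = i then 1 else 0)"

definition sign_flip :: "nat \<Rightarrow> (nat \<Rightarrow> real) \<Rightarrow> nat \<Rightarrow> real" where
  "sign_flip R x = (\<lambda>v. (if v < R then 1 else -1) * x v)"

definition bipartite :: "nat \<Rightarrow> nat \<Rightarrow> real mat \<Rightarrow> bool" where
  "bipartite n R A \<longleftrightarrow> (\<forall>v<n. \<forall>w<n. A $$ (v,w) \<noteq> 0 \<longrightarrow> (v < R \<longleftrightarrow> R \<le> w))"

lemma bipartite_A_bp:
  assumes "X \<in> carrier_mat R C"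
  shows "bipartite (R + C) R (A_bp X)"
  unfolding bipartite_def
proof (intro allI impI)
  fix v w assume "v < R + C" "w < R + C" "A_bp X $$ (v,w) \<noteq> 0"
  from A_bp_edge[OF assms this] show "v < R \<longleftrightarrow> R \<le> w" by linarith
qed

lemma L_sym_shift_carrier: "L_sym_shift n A \<in> carrier_mat n n"
  by (simp add: L_sym_shift_def)

lemma symmetric_L_sym_shift: "adjacency_mat n A \<Longrightarrow> symmetric_mat n (L_sym_shift n A)"
  using symmetric_L_sym[of n A] by (auto simp: symmetric_mat_def L_sym_shift_def)

lemma mat_app_L_sym_shift:
  "r < n \<Longrightarrow> mat_app n (L_sym_shift n A) x r
     = mat_app n (L_sym A) x r + (if vertex_deg A r = 0 then 2 * x r else 0)"
proof -
  assume r: "r < n"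
  have "mat_app n (L_sym_shift n A) x r = (\<Sum>k<n. L_sym A $$ (r,k) * x k
      + (if k = r then (if vertex_deg A r = 0 then 2 * x r else 0) else 0))"
    unfolding mat_app_def by (rule sum.cong) (use r in \<open>auto simp: L_sym_shift_def algebra_simps\<close>)
  thus ?thesis using r by (simp add: sum.distrib mat_app_def)
qed

lemma mat_app_L_sym_shift_vanishing:
  "r < n \<Longrightarrow> (\<And>v. v < n \<Longrightarrow> vertex_deg A v = 0 \<Longrightarrow> x v = 0) \<Longrightarrow>
   mat_app n (L_sym_shift n A) x r = mat_app n (L_sym A) x r"
  by (simp add: mat_app_L_sym_shift)

lemma L_sym_shift_quad_form:
  "dot n x (mat_app n (L_sym_shift n A) x)
     = dot n x (mat_app n (L_sym A) x) + 2 * (\<Sum>i\<in>isolated_vertices n A. (x i)^2)"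
proof -
  have "dot n x (mat_app n (L_sym_shift n A) x) = dot n x (mat_app n (L_sym A) x)
      + (\<Sum>r<n. if vertex_deg A r = 0 then 2 * (x r)^2 else 0)"
    unfolding dot_def sum.distrib[symmetric]
    by (rule sum.cong) (auto simp: mat_app_L_sym_shift algebra_simps power2_eq_square)
  also have "(\<Sum>r<n. if vertex_deg A r = 0 then 2 * (x r)^2 else 0)
      = 2 * (\<Sum>i\<in>isolated_vertices n A. (x i)^2)"
    unfolding isolated_vertices_def sum_distrib_left
    by (subst sum.inter_filter[symmetric]) (auto simp: lessThan_def)
  finally show ?thesis .
qed

lemma dot_unit_fun:
  assumes "i < n"
  shows "dot n (unit_fun i) x = x i"
proof -
  have "dot n (unit_fun i) x = (\<Sum>k<n. if k = i then x k else 0)"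
    unfolding dot_def unit_fun_def by (rule sum.cong) auto
  thus ?thesis using assms by simp
qed

lemma isolated_unit_fun_eigenvector:
  assumes A: "adjacency_mat n A" and i: "i \<in> isolated_vertices n A" and r: "r < n"
  shows "mat_app n (L_sym A) (unit_fun i) r = unit_fun i r"
    and "mat_app n (L_sym_shift n A) (unit_fun i) r = 3 * unit_fun i r"
proof -
  have c: "A \<in> carrier_mat n n" using A by (simp add: adjacency_mat_def)
  have i': "i < n" "vertex_deg A i = 0" using i by (auto simp: isolated_vertices_def)
  have "mat_app n (L_sym A) (unit_fun i) r = (\<Sum>k<n. if k = i then L_sym A $$ (r,k) else 0)"
    unfolding mat_app_def unit_fun_def by (rule sum.cong) auto
  also have "\<dots> = L_sym A $$ (r,i)" using i' by simp
  also have "\<dots> = unit_fun i r" using index_L_sym[OF c r i'(1)] i'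
    by (simp add: inv_sqrt_deg_def unit_fun_def)
  finally show L: "mat_app n (L_sym A) (unit_fun i) r = unit_fun i r" .
  show "mat_app n (L_sym_shift n A) (unit_fun i) r = 3 * unit_fun i r"
    using mat_app_L_sym_shift[OF r, of A "unit_fun i"] L i' by (auto simp: unit_fun_def)
qed

lemma dot_sign_flip: "dot n (sign_flip R x) (sign_flip R y) = dot n x y"
  unfolding dot_def sign_flip_def by (rule sum.cong) auto

lemma L_sym_sign_flip_eigenvector:
  assumes A: "A \<in> carrier_mat n n" and bip: "bipartite n R A" and r: "r < n"
    and ev: "\<And>v. v < n \<Longrightarrow> mat_app n (L_sym A) x v = \<mu> * x v"
  shows "mat_app n (L_sym A) (sign_flip R x) r = (2 - \<mu>) * sign_flip R x r"
proof -
  define s where "s v = (if v < R then 1 else -1 :: real)" for v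
  define T where "T = (\<Sum>k<n. A $$ (r,k) * (inv_sqrt_deg A k * x k))"
  have "A $$ (r,k) * (inv_sqrt_deg A k * (s k * x k))
      = - s r * (A $$ (r,k) * (inv_sqrt_deg A k * x k))"
    if "k < n" for k
    using bip r that unfolding bipartite_def s_def by (cases "A $$ (r,k) = 0") auto
  hence "(\<Sum>k<n. A $$ (r,k) * (inv_sqrt_deg A k * (s k * x k))) = - s r * T"
    unfolding T_def sum_distrib_left by (intro sum.cong) auto
  moreover have "sign_flip R x = (\<lambda>v. s v * x v)" by (simp add: sign_flip_def s_def)
  ultimately have "mat_app n (L_sym A) (sign_flip R x) r = s r * x r + s r * (inv_sqrt_deg A r * T)"
    using mat_app_L_sym[OF A r, of "sign_flip R x"] by simp
  also have "inv_sqrt_deg A r * T = x r - \<mu> * x r"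
    using mat_app_L_sym[OF A r, of x] ev[OF r] by (simp add: T_def)
  finally show ?thesis by (simp add: sign_flip_def s_def algebra_simps)
qed

lemma mono_on_below_count:
  fixes f :: "nat \<Rightarrow> real"
  assumes f: "mono_on {..<n} f" and k: "k < n"
  shows "{i. i < n \<and> f i < f k} \<subseteq> {..<k}"
  using mono_onD[OF f, of k] k by (auto simp: not_less[symmetric])

lemma mono_on_le_of_card_le:
  fixes f :: "nat \<Rightarrow> real"
  assumes f: "mono_on {..<n} f" and B: "B \<le> card {i. i < n \<and> f i \<le> c}" and k: "k < B"
  shows "f k \<le> c"
proof (rule ccontr)
  assume "\<not> f k \<le> c"
  hence "{i. i < n \<and> f i \<le> c} \<subseteq> {..<k}" using mono_onD[OF f, of k] by (force simp: not_less[symmetric])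
  hence "card {i. i < n \<and> f i \<le> c} \<le> card {..<k}" by (intro card_mono) auto
  thus False using B k by simp
qed

context
  fixes n R :: nat and A :: "real mat" and q :: "nat \<Rightarrow> nat \<Rightarrow> real" and nu :: "nat \<Rightarrow> real"
  assumes A: "adjacency_mat n A" and bip: "bipartite n R A"
    and E: "orthonormal_eigenbasis n (L_sym_shift n A) q nu"
begin

lemma shift_eigenvector_vanishes_on_isolated:
  assumes k: "k < n" "nu k \<noteq> 3" and i: "i \<in> isolated_vertices n A"
  shows "q k i = 0"
proof -
  have "i < n" using i by (simp add: isolated_vertices_def)
  have "dot n (unit_fun i) (q k) = 0"
    by (rule dot_eigenvector_eigenbasis_eq_0[OF E symmetric_L_sym_shift[OF A] k(1), of _ 3])
       (use isolated_unit_fun_eigenvector(2)[OF A i] k(2) in auto)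
  thus ?thesis using dot_unit_fun[OF \<open>i < n\<close>] by simp
qed

lemma card_shift_eigenvalues_above_one_le:
  "card {k. k < n \<and> 1 < nu k \<and> nu k \<noteq> 3} \<le> card {k. k < n \<and> nu k < 1}"
proof (rule orthonormal_card_le)
  have "orthonormal n {k. k < n \<and> 1 < nu k \<and> nu k \<noteq> 3} q" by (rule eigenbasis_orthonormal[OF E]) auto
  thus "orthonormal n {k. k < n \<and> 1 < nu k \<and> nu k \<noteq> 3} (\<lambda>k. sign_flip R (q k))"
    by (simp add: orthonormal_def dot_sign_flip)
  show "orthonormal n {k. k < n \<and> nu k < 1} q" by (rule eigenbasis_orthonormal[OF E]) auto
  fix k assume "k \<in> {k. k < n \<and> 1 < nu k \<and> nu k \<noteq> 3}"
  hence k: "k < n" "1 < nu k" "nu k \<noteq> 3" by auto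
  have c: "A \<in> carrier_mat n n" using A by (simp add: adjacency_mat_def)
  have iso: "q k v = 0" "sign_flip R (q k) v = 0" if "v < n" "vertex_deg A v = 0" for v
    using shift_eigenvector_vanishes_on_isolated[OF k(1,3)] that
    by (simp_all add: isolated_vertices_def sign_flip_def)
  have "mat_app n (L_sym A) (q k) v = nu k * q k v" if "v < n" for v
    using mat_app_L_sym_shift_vanishing[OF that iso(1)] eigenbasis_eigenvector[OF E k(1) that] by simp
  hence "mat_app n (L_sym_shift n A) (sign_flip R (q k)) r = (2 - nu k) * sign_flip R (q k) r"
    if "r < n" for r
    using mat_app_L_sym_shift_vanishing[OF that iso(2)] L_sym_sign_flip_eigenvector[OF c bip that]
    by simp
  from eigenvector_parseval[OF E symmetric_L_sym_shift[OF A] this, of "\<lambda>\<mu>. \<mu> < 1"] k(2)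
  show "dot n (sign_flip R (q k)) (sign_flip R (q k))
      = (\<Sum>c\<in>{k. k < n \<and> nu k < 1}. (dot n (sign_flip R (q k)) (q c))^2)" by simp
qed auto

lemma card_shift_eigenvalue_three_le: "card {k. k < n \<and> nu k = 3} \<le> card (isolated_vertices n A)"
proof (rule orthonormal_card_le)
  show "orthonormal n {k. k < n \<and> nu k = 3} q" by (rule eigenbasis_orthonormal[OF E]) auto
  show "orthonormal n (isolated_vertices n A) unit_fun"
    unfolding orthonormal_def isolated_vertices_def
    by (auto simp: dot_unit_fun) (simp_all add: unit_fun_def)
  show "finite (isolated_vertices n A)" by (simp add: isolated_vertices_def)
  fix k assume "k \<in> {k. k < n \<and> nu k = 3}"
  hence k: "k < n" "nu k = 3" by auto
  let ?I = "\<Sum>i\<in>isolated_vertices n A. (q k i)^2"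
  have q1: "dot n (q k) (q k) = 1" using E k by (simp add: orthonormal_eigenbasis_def orthonormal_def)
  have "3 = dot n (q k) (mat_app n (L_sym A) (q k)) + 2 * ?I"
    using eigenbasis_quad_form[OF E k(1)] k(2) L_sym_shift_quad_form[of n "q k" A] by simp
  moreover have "?I \<le> dot n (q k) (q k)"
    unfolding dot_def power2_eq_square by (rule sum_mono2) (auto simp: isolated_vertices_def)
  ultimately have "dot n (q k) (q k) = ?I" using L_sym_quad_form_le[OF A, of "q k"] q1 by linarith
  also have "\<dots> = (\<Sum>c\<in>isolated_vertices n A. (dot n (q k) (unit_fun c))^2)"
    by (rule sum.cong) (auto simp: dot_commute[of n "q k"] dot_unit_fun isolated_vertices_def)
  finally show "dot n (q k) (q k) = (\<Sum>c\<in>isolated_vertices n A. (dot n (q k) (unit_fun c))^2)" .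
qed auto

lemma card_shift_eigenvalues_le_one:
  assumes B: "2 * B \<le> card {v. v < n \<and> vertex_deg A v \<noteq> 0}"
  shows "B \<le> card {k. k < n \<and> nu k \<le> 1}"
proof -
  let ?G1 = "{k. k < n \<and> nu k < 1}" and ?G12 = "{k. k < n \<and> nu k \<le> 1}"
  let ?G3 = "{k. k < n \<and> 1 < nu k \<and> nu k \<noteq> 3}" and ?G4 = "{k. k < n \<and> nu k = 3}"
  have "n = card (?G12 \<union> ?G3 \<union> ?G4)" by (rule arg_cong[where f = card, of "{..<n}", simplified]) auto
  also have "\<dots> = card ?G12 + card ?G3 + card ?G4" by (subst card_Un_disjoint, auto)+
  finally have "n = card ?G12 + card ?G3 + card ?G4" .
  moreover have "n = card ({v. v < n \<and> vertex_deg A v \<noteq> 0} \<union> isolated_vertices n A)"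
    by (rule arg_cong[where f = card, of "{..<n}", simplified]) (auto simp: isolated_vertices_def)
  hence "n = card {v. v < n \<and> vertex_deg A v \<noteq> 0} + card (isolated_vertices n A)"
    by (subst (asm) card_Un_disjoint) (auto simp: isolated_vertices_def)
  moreover have "card ?G1 \<le> card ?G12" by (rule card_mono) auto
  ultimately show ?thesis
    using card_shift_eigenvalues_above_one_le card_shift_eigenvalue_three_le B by linarith
qed

lemma shift_eigenvalue_le_L_sym_eigenvalue:
  assumes sorted: "mono_on {..<n} nu" and EL: "orthonormal_eigenbasis n (L_sym A) p lam"
    and sortedL: "mono_on {..<n} lam" and j: "j < n" "nu j \<le> 1"
  shows "nu j \<le> lam j"
proof (rule ccontr)
  assume "\<not> nu j \<le> lam j"
  hence lt: "lam j < nu j" by simp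
  have "card {..<Suc j} \<le> card {k. k < n \<and> nu k < nu j}"
  proof (rule orthonormal_card_le)
    show "orthonormal n {..<Suc j} p" by (rule eigenbasis_orthonormal[OF EL]) (use j in auto)
    show "orthonormal n {k. k < n \<and> nu k < nu j} q" by (rule eigenbasis_orthonormal[OF E]) auto
    fix i assume "i \<in> {..<Suc j}"
    hence i: "i < n" "lam i < nu j" using j lt mono_onD[OF sortedL, of i j] by auto
    have "p i v = 0" if "v < n" "vertex_deg A v = 0" for v
      using dot_eigenvector_eigenbasis_eq_0[OF EL symmetric_L_sym[OF A] i(1), of "unit_fun v" 1]
        isolated_unit_fun_eigenvector(1)[OF A] dot_unit_fun[of v n "p i"] that i(2) j(2)
      by (simp add: isolated_vertices_def)
    hence "mat_app n (L_sym_shift n A) (p i) r = lam i * p i r" if "r < n" for r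
      using mat_app_L_sym_shift_vanishing[OF that] eigenbasis_eigenvector[OF EL i(1) that] by simp
    from eigenvector_parseval[OF E symmetric_L_sym_shift[OF A] this, of "\<lambda>\<mu>. \<mu> < nu j"] i(2)
    show "dot n (p i) (p i) = (\<Sum>c\<in>{k. k < n \<and> nu k < nu j}. (dot n (p i) (q c))^2)" by simp
  qed auto
  moreover have "card {k. k < n \<and> nu k < nu j} \<le> j"
    using card_mono[OF _ mono_on_below_count[OF sorted j(1)]] by simp
  ultimately show False by simp
qed

end

lemma ky_fan_bound_attained:
  assumes A: "adjacency_mat n A" and bip: "bipartite n R A"
    and B: "2 * B \<le> card {v. v < n \<and> vertex_deg A v \<noteq> 0}"
  shows "\<exists>q. orthonormal n {..<B} q \<and> (\<forall>t<B. \<forall>v\<in>isolated_vertices n A. q t v = 0) \<and>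
    (\<Sum>t<B. dot n (q t) (mat_app n (L_sym A) (q t))) = (\<Sum>i<B. sorted_eigenvalues (L_sym A) ! i)"
proof -
  obtain q nu where E: "orthonormal_eigenbasis n (L_sym_shift n A) q nu" and nu: "mono_on {..<n} nu"
    using symmetric_mat_sorted_eigenbasis[OF L_sym_shift_carrier symmetric_L_sym_shift[OF A]] by blast
  obtain p lam where EL: "orthonormal_eigenbasis n (L_sym A) p lam" and lam: "mono_on {..<n} lam"
    and se: "\<forall>i<n. sorted_eigenvalues (L_sym A) ! i = lam i"
    using L_sym_sorted_eigenbasis[OF A] by blast
  have "card {v. v < n \<and> vertex_deg A v \<noteq> 0} \<le> card {..<n}" by (rule card_mono) auto
  hence "card {v. v < n \<and> vertex_deg A v \<noteq> 0} \<le> n" by simp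
  hence Bn: "B \<le> n" using B by linarith
  have nu1: "nu t \<le> 1" if "t < B" for t
    using mono_on_le_of_card_le[OF nu card_shift_eigenvalues_le_one[OF A bip E B] that] .
  have iso: "q t v = 0" if "t < B" "v \<in> isolated_vertices n A" for t v
    using shift_eigenvector_vanishes_on_isolated[OF A bip E] nu1 that Bn by force
  have quad: "dot n (q t) (mat_app n (L_sym A) (q t)) = nu t" if "t < B" for t
    using L_sym_shift_quad_form[of n "q t" A] eigenbasis_quad_form[OF E, of t] iso[OF that] that Bn
    by simp
  have O: "orthonormal n {..<B} q" by (rule eigenbasis_orthonormal[OF E]) (use Bn in auto)
  have "(\<Sum>i<B. lam i) \<le> (\<Sum>t<B. nu t)"
    using ky_fan_min_principle[OF EL symmetric_L_sym[OF A] lam O Bn] quad by simp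
  moreover have "(\<Sum>t<B. nu t) \<le> (\<Sum>i<B. lam i)"
    using shift_eigenvalue_le_L_sym_eigenvalue[OF A bip E nu EL lam] nu1 Bn by (intro sum_mono) auto
  ultimately show ?thesis using O iso quad se Bn by (intro exI[of _ q]) auto
qed

lemma deg_constraint_trace_attains_sum_smallest:
  assumes A: "adjacency_mat n A" and bip: "bipartite n R A"
    and B: "2 * B \<le> card {v. v < n \<and> vertex_deg A v \<noteq> 0}"
  shows "\<exists>U. U \<in> carrier_mat n B \<and> U\<^sup>T * diag_of_vec (deg A) * U = 1\<^sub>m B \<and>
    mtrace (U\<^sup>T * L_un A * U) = (\<Sum>i<B. sorted_eigenvalues (L_sym A) ! i)"
proof -
  obtain q where O: "orthonormal n {..<B} q" and iso: "\<forall>t<B. \<forall>v\<in>isolated_vertices n A. q t v = 0"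
    and sum: "(\<Sum>t<B. dot n (q t) (mat_app n (L_sym A) (q t)))
        = (\<Sum>i<B. sorted_eigenvalues (L_sym A) ! i)"
    using ky_fan_bound_attained[OF A bip B] by blast
  define U where "U = mat n B (\<lambda>(v,t). inv_sqrt_deg A v * q t v)"
  have U: "U \<in> carrier_mat n B" by (simp add: U_def)
  have col: "deg_sqrt_col A U t v = q t v" if "t < B" "v < n" for t v
    using that iso vertex_deg_nonneg[OF A that(2)]
    by (cases "vertex_deg A v = 0")
       (auto simp: deg_sqrt_col_def U_def isolated_vertices_def inv_sqrt_deg_def)
  have "orthonormal n {..<B} (deg_sqrt_col A U)"
    using O col by (simp add: orthonormal_def dot_def)
  moreover have "mtrace (U\<^sup>T * L_un A * U) = (\<Sum>t<B. dot n (q t) (mat_app n (L_sym A) (q t)))"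
    unfolding trace_L_un_eq_sum_L_sym_quad_forms[OF A U]
    using col by (intro sum.cong refl dot_cong) (auto intro: mat_app_cong)
  ultimately show ?thesis using U sum deg_constraint_iff_orthonormal[OF A U] by auto
qed

lemma sum_eig_small: "(\<Sum>j=1..B. eig_small j M) = (\<Sum>i<B. sorted_eigenvalues M ! i)"
  by (induction B) (auto simp: eig_small_def)

lemma block_diag_perm_iff_sum_eig_small_eq_0:
  assumes X: "X \<in> carrier_mat R C" "nonneg_mat X" and B: "1 \<le> B" "B \<le> R + C"
  shows "block_diag_perm B X \<longleftrightarrow> (\<Sum>j=1..B. eig_small j (L_sym (A_bp X))) = 0"
proof -
  note A = adjacency_mat_A_bp[OF X]
  have "block_diag_perm B X \<longleftrightarrow> (\<exists>k lab. B \<le> k \<and> graph_partition (R + C) (A_bp X) k lab)"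
    using block_diag_perm_iff_block_labeling[OF X(1)] ex_block_labeling_iff_graph_partition[OF X] B
    by simp
  also have "\<dots> \<longleftrightarrow> (\<Sum>i<B. sorted_eigenvalues (L_sym (A_bp X)) ! i) = 0"
    using sum_smallest_L_sym_eigenvalues_eq_0_of_partition[OF A _ _ B(2)]
      partition_of_sum_smallest_L_sym_eigenvalues_eq_0[OF A B(2)] by blast
  finally show ?thesis unfolding sum_eig_small .
qed

lemma feas1_iff:
  "1 \<le> B \<Longrightarrow> B \<le> R + C \<Longrightarrow>
   feas1 R C B X \<longleftrightarrow> feas3 R C X \<and> (\<Sum>j=1..B. eig_small j (L_sym (A_bp X))) = 0"
  unfolding feas1_def feas3_def using block_diag_perm_iff_sum_eig_small_eq_0 by blast

lemma card_pos_of_largest_B_pos: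
  assumes "largest_B_pos B xs"
  shows "B \<le> card {i. i < length xs \<and> xs ! i > 0}"
proof -
  define ys where "ys = rev (sort xs)"
  have "{..<B} \<subseteq> {j. j < length ys \<and> ys ! j > 0}"
    using assms unfolding largest_B_pos_def ys_def by auto
  hence "B \<le> card {j. j < length ys \<and> ys ! j > 0}" using card_mono[of _ "{..<B}"] by fastforce
  also have "\<dots> = length (filter (\<lambda>x. x > 0) ys)" by (simp add: length_filter_conv_card)
  also have "\<dots> = length (filter (\<lambda>x. x > 0) xs)"
    by (metis ys_def mset_filter mset_rev mset_sort size_mset)
  also have "\<dots> = card {i. i < length xs \<and> xs ! i > 0}" by (simp add: length_filter_conv_card)
  finally show ?thesis .
qed

lemma card_non_isolated_A_bp:
  assumes X: "X \<in> carrier_mat R C"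
    and rows: "largest_B_pos B (row_sums X)" and cols: "largest_B_pos B (col_sums X)"
  shows "2 * B \<le> card {v. v < R + C \<and> vertex_deg (A_bp X) v \<noteq> 0}"
proof -
  define S where "S = {i. i < R \<and> vertex_deg (A_bp X) i > 0}"
  define T where "T = {j. j < C \<and> vertex_deg (A_bp X) (R + j) > 0}"
  have "{i. i < length (row_sums X) \<and> row_sums X ! i > 0} = S"
    using X by (auto simp: S_def row_sums_def vertex_deg_A_bp_row)
  hence "B \<le> card S" using card_pos_of_largest_B_pos[OF rows] by simp
  moreover have "{j. j < length (col_sums X) \<and> col_sums X ! j > 0} = T"
    using X by (auto simp: T_def col_sums_def vertex_deg_A_bp_col)
  hence "B \<le> card T" using card_pos_of_largest_B_pos[OF cols] by simp
  moreover have "card (S \<union> (\<lambda>j. R + j) ` T) = card S + card T"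
    by (subst card_Un_disjoint) (auto simp: S_def T_def card_image)
  moreover have "card (S \<union> (\<lambda>j. R + j) ` T) \<le> card {v. v < R + C \<and> vertex_deg (A_bp X) v \<noteq> 0}"
    by (rule card_mono) (auto simp: S_def T_def)
  ultimately show ?thesis by linarith
qed

lemma obj3_le_obj4:
  assumes "feas4 R C B Y V" and "\<alpha> \<ge> 0" and "B \<le> R + C"
  shows "obj3 f \<alpha> B Y \<le> obj4 f \<alpha> Y V"
  using assms sum_smallest_L_sym_eigenvalues_le_trace[OF adjacency_mat_A_bp, of Y R C V B]
  unfolding feas4_def obj3_def obj4_def sum_eig_small by (simp add: mult_left_mono)

lemma obj4_attains_obj3:
  assumes "feas3 R C X" and "largest_B_pos B (row_sums X)" and "largest_B_pos B (col_sums X)"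
  shows "\<exists>U. feas4 R C B X U \<and> obj4 f \<alpha> X U = obj3 f \<alpha> B X"
  using assms deg_constraint_trace_attains_sum_smallest[OF adjacency_mat_A_bp bipartite_A_bp
      card_non_isolated_A_bp, of X R C B]
  unfolding feas3_def feas4_def obj3_def obj4_def sum_eig_small by auto

lemma global_min_restrict:
  "global_min F g X \<Longrightarrow> G X \<Longrightarrow> (\<And>Y. G Y \<Longrightarrow> F Y \<and> g Y = h Y) \<Longrightarrow> global_min G h X"
  unfolding global_min_def by metis

lemma local_min_restrict:
  "local_min F g X \<Longrightarrow> G X \<Longrightarrow> (\<And>Y. G Y \<Longrightarrow> F Y \<and> g Y = h Y) \<Longrightarrow> local_min G h X"
  unfolding local_min_def by metis

lemma coord_min_global_min2:
  assumes "global_min F g X" and "\<And>Y V. G Y V \<Longrightarrow> F Y \<and> g Y \<le> h Y V"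
    and "G X U" and "h X U = g X"
  shows "coord_min G h X U \<and> global_min2 G h X U"
  using assms unfolding global_min_def global_min2_def coord_min_def by (metis order_trans)

lemma coord_min_local_min2:
  assumes "local_min F g X" and "\<And>Y V. G Y V \<Longrightarrow> F Y \<and> g Y \<le> h Y V"
    and "G X U" and "h X U = g X"
  shows "coord_min G h X U \<and> local_min2 G h X U"
  using assms unfolding local_min_def local_min2_def coord_min_def by (metis order_trans)

theorem proposition6:
  fixes f :: "real mat \<Rightarrow> real" and \<alpha> :: real and B R C :: nat
  assumes "\<alpha> > 0" and "B \<ge> 1" and "B \<le> R + C"
  shows
   "(\<forall>X. global_min (feas3 R C) (obj3 f \<alpha> B) X \<and>
          (\<Sum>j=1..B. eig_small j (L_sym (A_bp X))) = 0
        \<longrightarrow> global_min (feas1 R C B) f X) \<and>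
    (\<forall>X. local_min (feas3 R C) (obj3 f \<alpha> B) X \<and>
          (\<Sum>j=1..B. eig_small j (L_sym (A_bp X))) = 0
        \<longrightarrow> local_min (feas1 R C B) f X) \<and>
    (\<forall>X. global_min (feas3 R C) (obj3 f \<alpha> B) X \<and>
          largest_B_pos B (row_sums X) \<and> largest_B_pos B (col_sums X)
        \<longrightarrow> (\<exists>U. coord_min (feas4 R C B) (obj4 f \<alpha>) X U \<and>
                 global_min2 (feas4 R C B) (obj4 f \<alpha>) X U)) \<and>
    (\<forall>X. local_min (feas3 R C) (obj3 f \<alpha> B) X \<and>
          largest_B_pos B (row_sums X) \<and> largest_B_pos B (col_sums X)
        \<longrightarrow> (\<exists>U. coord_min (feas4 R C B) (obj4 f \<alpha>) X U \<and>
                 local_min2 (feas4 R C B) (obj4 f \<alpha>) X U))"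
proof -
  have obj3_on_feas1: "feas1 R C B Y \<Longrightarrow> feas3 R C Y \<and> obj3 f \<alpha> B Y = f Y" for Y
    using feas1_iff[OF assms(2,3)] by (simp add: obj3_def)
  have obj3_below_obj4:
    "feas4 R C B Y V \<Longrightarrow> feas3 R C Y \<and> obj3 f \<alpha> B Y \<le> obj4 f \<alpha> Y V" for Y V
    using obj3_le_obj4[of R C B Y V \<alpha> f] assms by (simp add: feas3_def feas4_def)
  show ?thesis
  proof (intro conjI allI impI; elim conjE)
    fix X
    assume "(\<Sum>j=1..B. eig_small j (L_sym (A_bp X))) = 0"
    hence feas1: "feas3 R C X \<Longrightarrow> feas1 R C B X" using feas1_iff[OF assms(2,3)] by simp
    show "global_min (feas1 R C B) f X" if "global_min (feas3 R C) (obj3 f \<alpha> B) X"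
      using global_min_restrict[OF that _ obj3_on_feas1] feas1 that by (simp add: global_min_def)
    show "local_min (feas1 R C B) f X" if "local_min (feas3 R C) (obj3 f \<alpha> B) X"
      using local_min_restrict[OF that _ obj3_on_feas1] feas1 that by (simp add: local_min_def)
  next
    fix X
    assume "largest_B_pos B (row_sums X)" and "largest_B_pos B (col_sums X)"
    hence U: "\<exists>U. feas4 R C B X U \<and> obj4 f \<alpha> X U = obj3 f \<alpha> B X" if "feas3 R C X"
      using obj4_attains_obj3[OF that] by blast
    show "\<exists>U. coord_min (feas4 R C B) (obj4 f \<alpha>) X U \<and> global_min2 (feas4 R C B) (obj4 f \<alpha>) X U"
      if "global_min (feas3 R C) (obj3 f \<alpha> B) X"
      using U that coord_min_global_min2[where G = "feas4 R C B" and h = "obj4 f \<alpha>",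
          OF that obj3_below_obj4]
      by (auto simp: global_min_def)
    show "\<exists>U. coord_min (feas4 R C B) (obj4 f \<alpha>) X U \<and> local_min2 (feas4 R C B) (obj4 f \<alpha>) X U"
      if "local_min (feas3 R C) (obj3 f \<alpha> B) X"
      using U that coord_min_local_min2[where G = "feas4 R C B" and h = "obj4 f \<alpha>",
          OF that obj3_below_obj4]
      by (auto simp: local_min_def)
  qed
qed

end
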